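(* Let $r$ be an $\mathfrak s$-matrix on a pre-Lie algebra $(\mathfrak g,\cdot_{\mathfrak g})$, and for $\varphi\in C^k_{\mathfrak s}(\mathfrak g)=\wedge^{k-1}\mathfrak g\otimes\mathfrak g$ ($k\ge1$) set $\delta_{\mathfrak s}\varphi=(-1)^{k-1}\llbracket r,\varphi\rrbracket_{\mathfrak s}\in C^{k+1}_{\mathfrak s}(\mathfrak g)$. Then $\delta_{\mathfrak s}\circ\delta_{\mathfrak s}=0$ and for all $\alpha_1,\dots,\alpha_{k+1}\in\mathfrak g^*$, $$\delta_{\mathfrak s}\varphi(\alpha_1,\dots,\alpha_{k+1})=-\sum_{i=1}^k(-1)^{i+1}\varphi(\alpha_1,\dots,\widehat{\alpha_i},\dots,\alpha_k,\alpha_i\cdot_r\alpha_{k+1})+\sum_{1\le i<j\le k}(-1)^{i+j}\varphi([\alpha_i,\alpha_j]_r,\alpha_1,\dots,\widehat{\alpha_i},\dots,\widehat{\alpha_j},\dots,\alpha_{k+1}).$$ That is, $\delta_{\mathfrak s}$ is the pre-Lie algebra cochain differential of $(\mathfrak g^*,\cdot_r)$ with coefficients in the trivial representation.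
   Context: A pre-Lie algebra is a finite-dimensional vector space $\mathfrak g$ over a field of characteristic $0$ with product $\cdot$ satisfying $(x\cdot y)\cdot z-x\cdot(y\cdot z)=(y\cdot x)\cdot z-y\cdot(x\cdot z)$; $[x,y]_{\mathfrak g}=x\cdot y-y\cdot x$. Define $\langle L^*_x\alpha,y\rangle=-\langle\alpha,x\cdot y\rangle$, $\langle R^*_x\alpha,y\rangle=-\langle\alpha,y\cdot x\rangle$, $\mathrm{ad}^*_x=L^*_x-R^*_x$. For $r\in\mathrm{Sym}^2(\mathfrak g)$, $\langle r^\sharp(\alpha),\beta\rangle=r(\alpha,\beta)$; for $r=\sum_ia_i\otimes b_i$, $[r,r]=-\sum a_i\cdot a_j\otimes b_i\otimes b_j+\sum a_i\otimes b_i\cdot a_j\otimes b_j+\sum a_i\otimes a_j\otimes[b_i,b_j]_{\mathfrak g}$, and $r$ is an $\mathfrak s$-matrix if $[r,r]=0$. Set $\alpha\cdot_r\beta=\mathrm{ad}^*_{r^\sharp(\alpha)}\beta-R^*_{r^\sharp(\beta)}\alpha$ and $[\alpha,\beta]_r=L^*_{r^\sharp(\alpha)}\beta-L^*_{r^\sharp(\beta)}\alpha$. An element $\varphi\in\wedge^{k-1}\mathfrak g\otimes\mathfrak g$ is regarded as the $k$-linear map $\varphi(\alpha_1,\dots,\alpha_k)=\langle\varphi,\alpha_1\wedge\dots\wedge\alpha_{k-1}\otimes\alpha_k\rangle$ on $\mathfrak g^*$. The bracket $\llbracket\cdot,\cdot\rrbracket_{\mathfrak s}$ is $\llbracket\varphi,\phi\rrbracket_{\mathfrak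 s}=\Upsilon\llbracket\Psi\varphi,\Psi\phi\rrbracket$, where $\Psi:\wedge^k\mathfrak g\otimes\mathfrak g\to\mathrm{Hom}(\wedge^k\mathfrak g^*,\mathfrak g)$, $\langle\Psi(\varphi)(\alpha_1,\dots,\alpha_k),\alpha_{k+1}\rangle=\langle\varphi,\alpha_1\wedge\dots\wedge\alpha_k\otimes\alpha_{k+1}\rangle$, $\Upsilon=\Psi^{-1}$, and for $P\in\mathrm{Hom}(\wedge^n\mathfrak g^*,\mathfrak g)$, $Q\in\mathrm{Hom}(\wedge^m\mathfrak g^*,\mathfrak g)$, $\rho=L^*$: $\llbracket P,Q\rrbracket(u_1,\dots,u_{m+n})=\sum_{\sigma\in S_{(m,1,n-1)}}(-1)^\sigma P(\rho(Q(u_{\sigma(1)},\dots,u_{\sigma(m)}))u_{\sigma(m+1)},u_{\sigma(m+2)},\dots)-(-1)^{mn}\sum_{\sigma\in S_{(n,1,m-1)}}(-1)^\sigma Q(\rho(P(u_{\sigma(1)},\dots,u_{\sigma(n)}))u_{\sigma(n+1)},u_{\sigma(n+2)},\dots)+(-1)^{mn}\sum_{\sigma\in S_{(n,m)}}(-1)^\sigma[P(u_{\sigma(1)},\dots,u_{\sigma(n)}),Q(u_{\sigma(n+1)},\dots,u_{\sigma(m+n)})]_{\mathfrak g}$, with $S_{(i,j,l)}$ the unshuffles and sums with a negative block size equal to zero. *)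

theory Defs
  imports "HOL-Combinatorics.Permutations"
begin

text \<open>Coordinates: the finite-dimensional space g is 'n => 'a for a finite index type 'n
  (basis e_i = bvec i); the dual space g* is also 'n => 'a, with the pairing below
  (dual basis again bvec i).\<close>

definition pair :: "('n::finite \<Rightarrow> 'a::field) \<Rightarrow> ('n \<Rightarrow> 'a) \<Rightarrow> 'a" where
  "pair \<alpha> x = (\<Sum>i\<in>UNIV. \<alpha> i * x i)"

definition bvec :: "'n \<Rightarrow> 'n \<Rightarrow> 'a::zero_neq_one" where
  "bvec i = (\<lambda>j. if j = i then 1 else 0)"

text \<open>The bilinear product on g given by structure constants: e_i . e_j = sum_k c i j k e_k.\<close>
definition pmul :: "('n::finite \<Rightarrow> 'n \<Rightarrow> 'n \<Rightarrow> 'a::field) \<Rightarrow> ('n \<Rightarrow> 'a) \<Rightarrow> ('n \<Rightarrow> 'a) \<Rightarrow> ('n \<Rightarrow> 'a)" where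
  "pmul c x y = (\<lambda>k. \<Sum>i\<in>UNIV. \<Sum>j\<in>UNIV. x i * y j * c i j k)"

definition pre_lie :: "('n::finite \<Rightarrow> 'n \<Rightarrow> 'n \<Rightarrow> 'a::field) \<Rightarrow> bool" where
  "pre_lie c \<longleftrightarrow> (\<forall>x y z k.
     pmul c (pmul c x y) z k - pmul c x (pmul c y z) k
   = pmul c (pmul c y x) z k - pmul c y (pmul c x z) k)"

definition lbr :: "('n::finite \<Rightarrow> 'n \<Rightarrow> 'n \<Rightarrow> 'a::field) \<Rightarrow> ('n \<Rightarrow> 'a) \<Rightarrow> ('n \<Rightarrow> 'a) \<Rightarrow> ('n \<Rightarrow> 'a)" where
  "lbr c x y = (\<lambda>k. pmul c x y k - pmul c y x k)"

definition Lstar :: "('n::finite \<Rightarrow> 'n \<Rightarrow> 'n \<Rightarrow> 'a::field) \<Rightarrow> ('n \<Rightarrow> 'a) \<Rightarrow> ('n \<Rightarrow> 'a) \<Rightarrow> ('n \<Rightarrow> 'a)" where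
  "Lstar c x \<alpha> = (\<lambda>j. - pair \<alpha> (pmul c x (bvec j)))"

definition Rstar :: "('n::finite \<Rightarrow> 'n \<Rightarrow> 'n \<Rightarrow> 'a::field) \<Rightarrow> ('n \<Rightarrow> 'a) \<Rightarrow> ('n \<Rightarrow> 'a) \<Rightarrow> ('n \<Rightarrow> 'a)" where
  "Rstar c x \<alpha> = (\<lambda>j. - pair \<alpha> (pmul c (bvec j) x))"

definition adstar :: "('n::finite \<Rightarrow> 'n \<Rightarrow> 'n \<Rightarrow> 'a::field) \<Rightarrow> ('n \<Rightarrow> 'a) \<Rightarrow> ('n \<Rightarrow> 'a) \<Rightarrow> ('n \<Rightarrow> 'a)" where
  "adstar c x \<alpha> = (\<lambda>j. Lstar c x \<alpha> j - Rstar c x \<alpha> j)"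

text \<open>r = sum_{p,q} R p q e_p (x) e_q in g (x) g, as a bilinear form on g*, and r^sharp.\<close>
definition rform :: "('n::finite \<Rightarrow> 'n \<Rightarrow> 'a::field) \<Rightarrow> ('n \<Rightarrow> 'a) \<Rightarrow> ('n \<Rightarrow> 'a) \<Rightarrow> 'a" where
  "rform R \<alpha> \<beta> = (\<Sum>p\<in>UNIV. \<Sum>q\<in>UNIV. \<alpha> p * R p q * \<beta> q)"

definition rsharp :: "('n::finite \<Rightarrow> 'n \<Rightarrow> 'a::field) \<Rightarrow> ('n \<Rightarrow> 'a) \<Rightarrow> ('n \<Rightarrow> 'a)" where
  "rsharp R \<alpha> = (\<lambda>q. rform R \<alpha> (bvec q))"

definition symmetric_tensor :: "('n \<Rightarrow> 'n \<Rightarrow> 'a) \<Rightarrow> bool" where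
  "symmetric_tensor R \<longleftrightarrow> (\<forall>p q. R p q = R q p)"

text \<open>[r,r] for r = sum_i a_i (x) b_i with the index i = (p,q), a_i = R p q e_p, b_i = e_q,
  evaluated as a trilinear form on g*.\<close>
definition rr :: "('n::finite \<Rightarrow> 'n \<Rightarrow> 'n \<Rightarrow> 'a::field) \<Rightarrow> ('n \<Rightarrow> 'n \<Rightarrow> 'a)
    \<Rightarrow> ('n \<Rightarrow> 'a) \<Rightarrow> ('n \<Rightarrow> 'a) \<Rightarrow> ('n \<Rightarrow> 'a) \<Rightarrow> 'a" where
  "rr c R \<alpha> \<beta> \<gamma> =
     - (\<Sum>p\<in>UNIV. \<Sum>q\<in>UNIV. \<Sum>s\<in>UNIV. \<Sum>t\<in>UNIV.
          R p q * R s t * pair \<alpha> (pmul c (bvec p) (bvec s)) * pair \<beta> (bvec q) * pair \<gamma> (bvec t))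
     + (\<Sum>p\<in>UNIV. \<Sum>q\<in>UNIV. \<Sum>s\<in>UNIV. \<Sum>t\<in>UNIV.
          R p q * R s t * pair \<alpha> (bvec p) * pair \<beta> (pmul c (bvec q) (bvec s)) * pair \<gamma> (bvec t))
     + (\<Sum>p\<in>UNIV. \<Sum>q\<in>UNIV. \<Sum>s\<in>UNIV. \<Sum>t\<in>UNIV.
          R p q * R s t * pair \<alpha> (bvec p) * pair \<beta> (bvec s) * pair \<gamma> (lbr c (bvec q) (bvec t)))"

definition s_matrix :: "('n::finite \<Rightarrow> 'n \<Rightarrow> 'n \<Rightarrow> 'a::field) \<Rightarrow> ('n \<Rightarrow> 'n \<Rightarrow> 'a) \<Rightarrow> bool" where
  "s_matrix c R \<longleftrightarrow> (\<forall>\<alpha> \<beta> \<gamma>. rr c R \<alpha> \<beta> \<gamma> = 0)"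

definition dotr :: "('n::finite \<Rightarrow> 'n \<Rightarrow> 'n \<Rightarrow> 'a::field) \<Rightarrow> ('n \<Rightarrow> 'n \<Rightarrow> 'a) \<Rightarrow> ('n \<Rightarrow> 'a) \<Rightarrow> ('n \<Rightarrow> 'a) \<Rightarrow> ('n \<Rightarrow> 'a)" where
  "dotr c R \<alpha> \<beta> = (\<lambda>j. adstar c (rsharp R \<alpha>) \<beta> j - Rstar c (rsharp R \<beta>) \<alpha> j)"

definition brr :: "('n::finite \<Rightarrow> 'n \<Rightarrow> 'n \<Rightarrow> 'a::field) \<Rightarrow> ('n \<Rightarrow> 'n \<Rightarrow> 'a) \<Rightarrow> ('n \<Rightarrow> 'a) \<Rightarrow> ('n \<Rightarrow> 'a) \<Rightarrow> ('n \<Rightarrow> 'a)" where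
  "brr c R \<alpha> \<beta> = (\<lambda>j. Lstar c (rsharp R \<alpha>) \<beta> j - Lstar c (rsharp R \<beta>) \<alpha> j)"

text \<open>Cochains in C^k = wedge^{k-1} g (x) g, viewed as k-linear maps on g* (functions on
  lists of k covectors), multilinear and alternating in the first k-1 arguments.\<close>
definition is_cochain :: "nat \<Rightarrow> (('n::finite \<Rightarrow> 'a::field) list \<Rightarrow> 'a) \<Rightarrow> bool" where
  "is_cochain k \<phi> \<longleftrightarrow>
     (\<forall>xs i (a::'a) y z. length xs = k \<and> i < k \<longrightarrow>
        \<phi> (xs[i := (\<lambda>j. a * y j + z j)]) = a * \<phi> (xs[i := y]) + \<phi> (xs[i := z])) \<and>
     (\<forall>xs i j. length xs = k \<and> i < j \<and> j < k - 1 \<and> xs ! i = xs ! j \<longrightarrow> \<phi> xs = 0)"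

definition rcochain :: "('n::finite \<Rightarrow> 'n \<Rightarrow> 'a::field) \<Rightarrow> ('n \<Rightarrow> 'a) list \<Rightarrow> 'a" where
  "rcochain R as = rform R (as ! 0) (as ! 1)"

definition Psi :: "(('n::finite \<Rightarrow> 'a::field) list \<Rightarrow> 'a) \<Rightarrow> ('n \<Rightarrow> 'a) list \<Rightarrow> ('n \<Rightarrow> 'a)" where
  "Psi \<phi> us = (\<lambda>i. \<phi> (us @ [bvec i]))"

definition Upsilon :: "(('n::finite \<Rightarrow> 'a::field) list \<Rightarrow> ('n \<Rightarrow> 'a)) \<Rightarrow> ('n \<Rightarrow> 'a) list \<Rightarrow> 'a" where
  "Upsilon P \<alpha>s = pair (last \<alpha>s) (P (butlast \<alpha>s))"

definition unsh :: "nat list \<Rightarrow> (nat \<Rightarrow> nat) set" where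
  "unsh bs = {\<sigma>. \<sigma> permutes {..<sum_list bs} \<and>
     (\<forall>b<length bs. \<forall>x y. sum_list (take b bs) \<le> x \<and> x < y \<and> y < sum_list (take (Suc b) bs)
        \<longrightarrow> \<sigma> x < \<sigma> y)}"

text \<open>The arguments u_sigma(a+1), ..., u_sigma(a+len) (0-based positions a..a+len-1).\<close>
definition pick :: "(nat \<Rightarrow> nat) \<Rightarrow> 'b list \<Rightarrow> nat \<Rightarrow> nat \<Rightarrow> 'b list" where
  "pick \<sigma> us a len = map (\<lambda>x. us ! \<sigma> x) [a..<a + len]"

text \<open>The bracket on Hom(wedge^n g*, g) x Hom(wedge^m g*, g), rho = L^*; sums with a negative
  block size are zero.\<close>
definition sbr :: "('n::finite \<Rightarrow> 'n \<Rightarrow> 'n \<Rightarrow> 'a::field) \<Rightarrow> nat \<Rightarrow> nat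
    \<Rightarrow> (('n \<Rightarrow> 'a) list \<Rightarrow> ('n \<Rightarrow> 'a)) \<Rightarrow> (('n \<Rightarrow> 'a) list \<Rightarrow> ('n \<Rightarrow> 'a))
    \<Rightarrow> ('n \<Rightarrow> 'a) list \<Rightarrow> ('n \<Rightarrow> 'a)" where
  "sbr c n m P Q us = (\<lambda>i.
      (if 1 \<le> n then (\<Sum>\<sigma>\<in>unsh [m, 1, n - 1]. of_int (sign \<sigma>) *
          P (Lstar c (Q (pick \<sigma> us 0 m)) (us ! \<sigma> m) # pick \<sigma> us (m + 1) (n - 1)) i) else 0)
    - (-1) ^ (m * n) * (if 1 \<le> m then (\<Sum>\<sigma>\<in>unsh [n, 1, m - 1]. of_int (sign \<sigma>) *
          Q (Lstar c (P (pick \<sigma> us 0 n)) (us ! \<sigma> n) # pick \<sigma> us (n + 1) (m - 1)) i) else 0)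
    + (-1) ^ (m * n) * (\<Sum>\<sigma>\<in>unsh [n, m]. of_int (sign \<sigma>) *
          lbr c (P (pick \<sigma> us 0 n)) (Q (pick \<sigma> us n m)) i))"

definition sbr_s :: "('n::finite \<Rightarrow> 'n \<Rightarrow> 'n \<Rightarrow> 'a::field) \<Rightarrow> nat \<Rightarrow> nat
    \<Rightarrow> (('n \<Rightarrow> 'a) list \<Rightarrow> 'a) \<Rightarrow> (('n \<Rightarrow> 'a) list \<Rightarrow> 'a) \<Rightarrow> ('n \<Rightarrow> 'a) list \<Rightarrow> 'a" where
  "sbr_s c a b \<phi> \<psi> = Upsilon (sbr c (a - 1) (b - 1) (Psi \<phi>) (Psi \<psi>))"

definition delta_s :: "('n::finite \<Rightarrow> 'n \<Rightarrow> 'n \<Rightarrow> 'a::field) \<Rightarrow> ('n \<Rightarrow> 'n \<Rightarrow> 'a) \<Rightarrow> nat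
    \<Rightarrow> (('n \<Rightarrow> 'a) list \<Rightarrow> 'a) \<Rightarrow> ('n \<Rightarrow> 'a) list \<Rightarrow> 'a" where
  "delta_s c R k \<phi> = (\<lambda>\<alpha>s. (-1) ^ (k - 1) * sbr_s c 2 k (rcochain R) \<phi> \<alpha>s)"

end

theory Submission
  imports Defs
begin

text \<open>
  Paired with the last covector, the three
  unshuffle sums in [[r,\<phi>]]_s (of types (k-1,1,0), (1,1,k-2) and (1,k-1)) become the two
  kinds of terms of the pre-Lie cochain differential of (g*, \<cdot>_r) with trivial coefficients:
  the outer sums combine into the terms with \<alpha>_i \<cdot>_r \<alpha>_(k+1), the middle one into the terms
  with [\<alpha>_i, \<alpha>_j]_r.

  For \<delta>_s \<circ> \<delta>_s = 0: since r is symmetric, [r,r] = 0 says precisely that r^\<sharp> maps \<cdot>_r to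
  the product of g, so \<cdot>_r is again pre-Lie and [-,-]_r is its commutator. The explicit
  formula shows that \<delta>_s \<phi> is again linear in its first and last arguments, so
  \<delta>_s (\<delta>_s \<phi>) is the pre-Lie differential applied twice, whose terms cancel in four families:
  by the pre-Lie identity of \<cdot>_r, pairwise, by the Jacobi identity of [-,-]_r, and by
  antisymmetry of \<phi>.
\<close>

section \<open>Positions in sublists\<close>

lemma nths_single: "i < length xs \<Longrightarrow> nths xs {i} = [xs!i]"
proof (induction xs arbitrary: i)
  case Nil then show ?case by simp
next
  case (Cons a xs)
  show ?case
  proof (cases i)
    case 0 then show ?thesis by (simp add: nths_Cons)
  next
    case (Suc i')
    then have "{j. Suc j \<in> {i}} = {i'}" by auto
    with Suc Cons show ?thesis by (simp add: nths_Cons)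
  qed
qed

lemma nths_Cons_compl0: "nths (x # ws) (-{0}) = ws"
proof -
  have "{j. Suc j \<in> - {0}} = UNIV" by auto
  then show ?thesis by (simp add: nths_Cons nths_all)
qed

lemma nths_Cons_complSuc: "nths (x # ws) (-{Suc a}) = x # nths ws (-{a})"
proof -
  have "{j. Suc j \<in> - {Suc a}} = -{a}" by auto
  then show ?thesis by (simp add: nths_Cons)
qed

lemma nths_Cons_compl0Suc: "nths (x # ws) (-{0, Suc c}) = nths ws (-{c})"
proof -
  have "{j. Suc j \<in> - {0, Suc c}} = -{c}" by auto
  then show ?thesis by (simp add: nths_Cons)
qed

lemma nths_Cons_complSucSuc: "nths (x # ws) (-{Suc a, Suc c}) = x # nths ws (-{a,c})"
proof -
  have "{j. Suc j \<in> - {Suc a, Suc c}} = -{a,c}" by auto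
  then show ?thesis by (simp add: nths_Cons)
qed

lemma nths_compl_singleton: "nths xs (-{i}) = take i xs @ drop (Suc i) xs"
proof (cases "i < length xs")
  case True
  have e: "xs = take i xs @ drop i xs" by simp
  have "nths (take i xs @ drop i xs) (-{i}) = nths (take i xs) (-{i}) @ nths (drop i xs) {j. j + length (take i xs) \<in> -{i}}"
    by (rule nths_append)
  also have "nths (take i xs) (-{i}) = take i xs" by (rule nths_all) (use True in auto)
  also have "{j. j + length (take i xs) \<in> -{i}} = {j. j \<noteq> 0}" using True by auto
  also have "nths (drop i xs) {j. j \<noteq> 0} = drop (Suc i) xs"
  proof -
    obtain y ys where "drop i xs = y # ys" using True by (cases "drop i xs") auto
    moreover then have "drop (Suc i) xs = ys" by (metis drop_Suc list.sel(3) tl_drop)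
    moreover have "{j. Suc j \<in> {j. j \<noteq> 0}} = UNIV" by auto
    ultimately show ?thesis by (simp add: nths_Cons nths_all)
  qed
  finally show ?thesis using e by simp
next
  case False
  then show ?thesis by (simp add: nths_all)
qed

lemma nth_nths_compl_singleton: "i < length xs \<Longrightarrow> x < length xs - 1 \<Longrightarrow> nths xs (-{i}) ! x = xs ! (if x < i then x else Suc x)"
  unfolding nths_compl_singleton by (auto simp: nth_append min_def)

lemma length_nths_compl_singleton: "i < length xs \<Longrightarrow> length (nths xs (-{i})) = length xs - 1"
  unfolding nths_compl_singleton by simp

lemma length_nths_compl:
  assumes "finite S" "S \<subseteq> {..<length ys}"
  shows "length (nths ys (-S)) = length ys - card S"
proof -
  have "{i. i < length ys \<and> i \<in> -S} = {..<length ys} - S" by auto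
  then show ?thesis unfolding length_nths using assms by (simp add: card_Diff_subset)
qed

lemma nths_snoc_compl: "i < length us \<Longrightarrow> j < length us \<Longrightarrow> nths (us @ [z]) (-{i,j}) = nths us (-{i,j}) @ [z]"
  by (simp add: nths_append)

definition pos_in :: "nat set \<Rightarrow> nat \<Rightarrow> nat" where
  "pos_in A l = card {x\<in>A. x<l}"

lemma pos_in_mono: assumes "i \<in> A" "i < l" shows "pos_in A i < pos_in A l"
proof -
  have "{x\<in>A. x<i} \<subset> {x\<in>A. x<l}" using assms by auto
  moreover have "finite {x\<in>A. x<l}" by auto
  ultimately show ?thesis unfolding pos_in_def by (rule psubset_card_mono[rotated])
qed

lemma pos_in_inj: assumes "i \<in> A" "l \<in> A" "pos_in A i = pos_in A l" shows "i = l"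
  using pos_in_mono[of i A l] pos_in_mono[of l A i] assms by (metis less_irrefl nat_neq_iff)

lemma pos_in_less_iff: assumes "i \<in> A" "l \<in> A" shows "pos_in A i < pos_in A l \<longleftrightarrow> i < l"
  using pos_in_mono[of i A l] pos_in_mono[of l A i] assms by (metis less_asym nat_neq_iff)

lemma pos_in_lt_len: assumes "l \<in> A" "l < length xs" shows "pos_in A l < length (nths xs A)"
proof -
  have "{x\<in>A. x<l} \<subset> {i. i < length xs \<and> i \<in> A}" using assms by auto
  moreover have "finite {i. i < length xs \<and> i \<in> A}" by auto
  ultimately show ?thesis unfolding pos_in_def length_nths by (rule psubset_card_mono[rotated])
qed

lemma nths_nths_del: assumes "L \<subseteq> A" 
  shows "nths (nths xs A) (- (pos_in A ` L)) = nths xs (A - L)"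
proof -
  have "{i \<in> A. \<exists>j\<in>- pos_in A ` L. card {i' \<in> A. i' < i} = j} = A - L"
  proof (intro set_eqI iffI)
    fix i assume "i \<in> {i \<in> A. \<exists>j\<in>- pos_in A ` L. card {i' \<in> A. i' < i} = j}"
    then have i: "i \<in> A" "pos_in A i \<notin> pos_in A ` L" by (auto simp: pos_in_def)
    then show "i \<in> A - L" by auto
  next
    fix i assume i: "i \<in> A - L"
    have "pos_in A i \<notin> pos_in A ` L"
    proof
      assume "pos_in A i \<in> pos_in A ` L"
      then obtain l where "l \<in> L" "pos_in A i = pos_in A l" by auto
      then show False using pos_in_inj[of i A l] i assms by auto
    qed
    then show "i \<in> {i \<in> A. \<exists>j\<in>- pos_in A ` L. card {i' \<in> A. i' < i} = j}"
      using i by (auto simp: pos_in_def)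
  qed
  then show ?thesis by (simp add: nths_nths)
qed

lemma nths_nths_del1: "l \<in> A \<Longrightarrow> nths (nths xs A) (- {pos_in A l}) = nths xs (A - {l})"
  using nths_nths_del[of "{l}" A xs] by simp

lemma nths_nths_del2: "l \<in> A \<Longrightarrow> l' \<in> A \<Longrightarrow> nths (nths xs A) (- {pos_in A l, pos_in A l'}) = nths xs (A - {l, l'})"
  using nths_nths_del[of "{l,l'}" A xs] by simp

lemma nth_nths_pos_in: assumes "l \<in> A" "l < length xs" shows "nths xs A ! pos_in A l = xs ! l"
proof -
  have "nths (nths xs A) (pos_in A ` {l}) = nths xs {l}"
  proof -
    have "{i \<in> A. \<exists>j\<in>pos_in A ` {l}. card {i' \<in> A. i' < i} = j} = {l}"
      using assms pos_in_inj unfolding pos_in_def by auto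
    then show ?thesis by (simp add: nths_nths)
  qed
  then have "[nths xs A ! pos_in A l] = [xs ! l]"
    using nths_single[of "pos_in A l" "nths xs A"] nths_single[of l xs] pos_in_lt_len[OF assms] assms by simp
  then show ?thesis by simp
qed

lemma pos_in_bij: "bij_betw (pos_in A) {l\<in>A. l < n} {..<card {l\<in>A. l<n}}"
proof -
  have inj: "inj_on (pos_in A) {l\<in>A. l < n}" using pos_in_inj by (auto simp: inj_on_def)
  have sub: "pos_in A ` {l\<in>A. l < n} \<subseteq> {..<card {l\<in>A. l<n}}"
  proof
    fix y assume "y \<in> pos_in A ` {l\<in>A. l < n}"
    then obtain l where l: "l \<in> A" "l < n" "y = pos_in A l" by auto
    have "{x\<in>A. x<l} \<subset> {l\<in>A. l<n}" using l by auto
    then have "card {x\<in>A. x<l} < card {l\<in>A. l<n}" by (rule psubset_card_mono[rotated]) auto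
    then show "y \<in> {..<card {l\<in>A. l<n}}" using l by (simp add: pos_in_def)
  qed
  have "card (pos_in A ` {l\<in>A. l < n}) = card {..<card {l\<in>A. l<n}}"
    using card_image[OF inj] by simp
  then have "pos_in A ` {l\<in>A. l < n} = {..<card {l\<in>A. l<n}}"
    using sub by (intro card_subset_eq) auto
  then show ?thesis using inj by (simp add: bij_betw_def)
qed

lemma sum_pos_in: "(\<Sum>a<length (nths xs A). g a) = (\<Sum>l\<in>{l\<in>A. l < length xs}. g (pos_in A l))"
proof -
  have e: "length (nths xs A) = card {l\<in>A. l < length xs}"
    by (simp add: length_nths conj_commute)
  show ?thesis unfolding e by (rule sum.reindex_bij_betw[OF pos_in_bij, symmetric])
qed

lemma card_split_less: "card {x::nat. x < l} = card {x\<in>-S. x<l} + card {x\<in>S. x<l}"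
proof -
  have e: "{x. x < l} = {x\<in>-S. x<l} \<union> {x\<in>S. x<l}" by auto
  have f1: "finite {x\<in>-S. x<l}" by simp
  have f2: "finite {x\<in>S. x<l}" by simp
  have d: "{x\<in>-S. x<l} \<inter> {x\<in>S. x<l} = {}" by auto
  show ?thesis unfolding e by (rule card_Un_disjoint[OF f1 f2 d])
qed

lemma minus_one_pow_pos_in_compl:
  shows "(-1::'a::comm_ring_1) ^ pos_in (- S) l = (-1) ^ l * (-1) ^ card {x\<in>S. x<l}"
proof -
  have l: "l = pos_in (-S) l + card {x\<in>S. x<l}" unfolding pos_in_def
    using card_split_less[of l S] by simp
  define p where "p = pos_in (-S) l"
  define c where "c = card {x\<in>S. x<l}"
  have l2: "l = p + c" using l unfolding p_def c_def .
  have "(-1::'a) ^ l * (-1) ^ c = (-1) ^ p * ((-1) ^ c * (-1) ^ c)"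
    unfolding l2 power_add by (simp only: mult.assoc)
  also have "\<dots> = (-1) ^ p" by (simp only: minus_one_mult_self mult_1_right)
  finally show ?thesis unfolding p_def c_def by simp
qed

definition shift_sign :: "nat \<Rightarrow> nat \<Rightarrow> 'a::comm_ring_1" where
  "shift_sign i l = (if i < l then -1 else 1)"

lemma minus_one_pow_pos_in_compl1: "(-1::'a::comm_ring_1)^pos_in (-{i}) l = (-1)^l * shift_sign i l"
proof -
  have c: "card {x\<in>{i}. x<l} = (if i < l then 1 else 0)"
  proof (cases "i < l")
    case True then have "{x\<in>{i}. x<l} = {i}" by auto
    then show ?thesis using True by simp
  next
    case False then have "{x\<in>{i}. x<l} = {}" by auto
    then show ?thesis using False by simp
  qed
  show ?thesis unfolding minus_one_pow_pos_in_compl[of "{i}" l] c by (simp add: shift_sign_def)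
qed

lemma minus_one_pow_pos_in_compl2: assumes "i \<noteq> j" shows "(-1::'a::comm_ring_1)^pos_in (-{i,j}) l = (-1)^l * (shift_sign i l * shift_sign j l)"
proof -
  have "(-1::'a)^card {x\<in>{i,j}. x<l} = shift_sign i l * shift_sign j l"
  proof (cases "i < l"; cases "j < l")
    assume a: "i < l" "j < l" then have "{x\<in>{i,j}. x<l} = {i,j}" by auto
    then have "card {x\<in>{i,j}. x<l} = 2" using assms by simp
    then show ?thesis unfolding shift_sign_def using a by simp
  next
    assume a: "i < l" "\<not> j < l" then have "{x\<in>{i,j}. x<l} = {i}" by auto
    then have "card {x\<in>{i,j}. x<l} = 1" by simp
    then show ?thesis unfolding shift_sign_def using a by simp
  next
    assume a: "\<not> i < l" "j < l" then have "{x\<in>{i,j}. x<l} = {j}" by auto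
    then have "card {x\<in>{i,j}. x<l} = 1" by simp
    then show ?thesis unfolding shift_sign_def using a by simp
  next
    assume a: "\<not> i < l" "\<not> j < l" then have "{x\<in>{i,j}. x<l} = {}" by auto
    then have c: "card {x\<in>{i,j}. x<l} = 0" by simp
    show ?thesis unfolding c shift_sign_def using a by simp
  qed
  then show ?thesis unfolding minus_one_pow_pos_in_compl[of "{i,j}" l] by simp
qed

lemma shift_sign_swap: "a \<noteq> i \<Longrightarrow> (shift_sign a i :: 'a::comm_ring_1) = - shift_sign i a"
  by (auto simp: shift_sign_def)

lemma shift_sign_pair_swap: "a \<noteq> i \<Longrightarrow> a \<noteq> j \<Longrightarrow> (shift_sign a i * shift_sign a j :: 'a::comm_ring_1) = shift_sign i a * shift_sign j a"
  using shift_sign_swap[of a i] shift_sign_swap[of a j] by (metis minus_mult_minus)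

lemma sum_restrict_compl: "(\<Sum>l\<in>{l\<in>-S. l<(n::nat)}. f l) = (\<Sum>l<n. if l \<in> S then 0 else f l)"
proof -
  have e: "{l\<in>-S. l<n} = {l\<in>{..<n}. l \<notin> S}" by auto
  have "(\<Sum>l\<in>{l\<in>{..<n}. l \<notin> S}. f l) = (\<Sum>l<n. if l \<notin> S then f l else 0)"
    by (rule sum.inter_filter) simp
  also have "\<dots> = (\<Sum>l<n. if l \<in> S then 0 else f l)" by (rule sum.cong) auto
  finally show ?thesis unfolding e .
qed

lemma Compl_Diff_eq: "- A - B = - (A \<union> B)" by auto

lemma sum_nths_compl_singleton_twice:
  fixes F :: "'v \<Rightarrow> 'v list \<Rightarrow> 'a::comm_ring_1"
  assumes a: "a < length us"
  shows "(\<Sum>b<length us - 1. (-1)^b * F (nths us (-{a}) ! b) (nths (nths us (-{a})) (-{b})))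
    = (\<Sum>l<length us. if l = a then 0 else (-1)^l * shift_sign a l * F (us!l) (nths us (-{a,l})))"
proof -
  have la: "length (nths us (-{a})) = length us - 1" using a by (simp add: length_nths_compl_singleton)
  have "(\<Sum>b<length us - 1. (-1)^b * F (nths us (-{a}) ! b) (nths (nths us (-{a})) (-{b})))
    = (\<Sum>l\<in>{l\<in>-{a}. l < length us}. (-1)^pos_in (-{a}) l
        * F (nths us (-{a}) ! pos_in (-{a}) l) (nths (nths us (-{a})) (-{pos_in (-{a}) l})))"
    unfolding la[symmetric] by (rule sum_pos_in)
  also have "\<dots> = (\<Sum>l<length us. if l \<in> {a} then 0 else (-1)^pos_in (-{a}) l
        * F (nths us (-{a}) ! pos_in (-{a}) l) (nths (nths us (-{a})) (-{pos_in (-{a}) l})))"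
    by (rule sum_restrict_compl)
  also have "\<dots> = (\<Sum>l<length us. if l = a then 0 else (-1)^l * shift_sign a l * F (us!l) (nths us (-{a,l})))"
  proof (rule sum.cong[OF refl])
    fix l assume l: "l \<in> {..<length us}"
    show "(if l \<in> {a} then 0 else (-1)^pos_in (-{a}) l
        * F (nths us (-{a}) ! pos_in (-{a}) l) (nths (nths us (-{a})) (-{pos_in (-{a}) l})))
      = (if l = a then 0 else (-1)^l * shift_sign a l * F (us!l) (nths us (-{a,l})))"
    proof (cases "l = a")
      case False
      then have lA: "l \<in> -{a}" by simp
      have "-{a} - {l} = -{a,l}" by auto
      then show ?thesis
        using False l unfolding nth_nths_pos_in[OF lA l[simplified]] nths_nths_del1[OF lA]
          minus_one_pow_pos_in_compl1
        by simp
    qed simp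
  qed
  finally show ?thesis .
qed

lemma sum_pairs:
  "(\<Sum>i<(n::nat). \<Sum>l<n. if l = i then 0 else f i l) = (\<Sum>i<n. \<Sum>l<n. if i < l then f i l + f l i else (0::'a::comm_monoid_add))"
proof -
  have "(\<Sum>i<n. \<Sum>l<n. if l = i then 0 else f i l) =
        (\<Sum>i<n. \<Sum>l<n. (if i<l then f i l else 0) + (if l<i then f i l else 0))"
    by (intro sum.cong refl) auto
  also have "\<dots> = (\<Sum>i<n. \<Sum>l<n. if i<l then f i l else 0) + (\<Sum>i<n. \<Sum>l<n. if l<i then f i l else 0)"
    by (simp add: sum.distrib)
  also have "(\<Sum>i<n. \<Sum>l<n. if l<i then f i l else 0) = (\<Sum>i<n. \<Sum>l<n. if i<l then f l i else 0)"
    by (rule sum.swap)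
  also have "(\<Sum>i<n. \<Sum>l<n. if i<l then f i l else 0) + (\<Sum>i<n. \<Sum>l<n. if i<l then f l i else 0)
      = (\<Sum>i<n. \<Sum>l<n. if i < l then f i l + f l i else 0)"
    by (simp add: sum.distrib[symmetric]) (intro sum.cong refl, auto)
  finally show ?thesis .
qed

lemma sum_triples:
  "(\<Sum>i<(n::nat). \<Sum>j<n. \<Sum>c<n. if i<j \<and> c\<noteq>i \<and> c\<noteq>j then f i j c else 0) =
   (\<Sum>u<n. \<Sum>v<n. \<Sum>w<n. if u<v \<and> v<w then f u v w + f u w v + f v w u else (0::'a::comm_monoid_add))"
proof -
  have "(\<Sum>i<(n::nat). \<Sum>j<n. \<Sum>c<n. if i<j \<and> c\<noteq>i \<and> c\<noteq>j then f i j c else 0) =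
     (\<Sum>i<n. \<Sum>j<n. \<Sum>c<n. (if i<j \<and> j<c then f i j c else 0) + (if i<c \<and> c<j then f i j c else 0)
        + (if c<i \<and> i<j then f i j c else 0))"
    by (intro sum.cong refl) auto
  also have "\<dots> = (\<Sum>i<n. \<Sum>j<n. \<Sum>c<n. if i<j \<and> j<c then f i j c else 0)
     + (\<Sum>i<n. \<Sum>j<n. \<Sum>c<n. if i<c \<and> c<j then f i j c else 0)
     + (\<Sum>i<n. \<Sum>j<n. \<Sum>c<n. if c<i \<and> i<j then f i j c else 0)"
    by (simp add: sum.distrib)
  also have "(\<Sum>i<n. \<Sum>j<n. \<Sum>c<n. if i<c \<and> c<j then f i j c else 0)
     = (\<Sum>i<n. \<Sum>c<n. \<Sum>j<n. if i<c \<and> c<j then f i j c else 0)"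
    by (rule sum.cong[OF refl], rule sum.swap)
  also have "(\<Sum>i<n. \<Sum>j<n. \<Sum>c<n. if c<i \<and> i<j then f i j c else 0)
     = (\<Sum>i<n. \<Sum>c<n. \<Sum>j<n. if c<i \<and> i<j then f i j c else 0)"
    by (rule sum.cong[OF refl], rule sum.swap)
  also have "\<dots> = (\<Sum>c<n. \<Sum>i<n. \<Sum>j<n. if c<i \<and> i<j then f i j c else 0)"
    by (rule sum.swap)
  also have "(\<Sum>i<n. \<Sum>j<n. \<Sum>c<n. if i<j \<and> j<c then f i j c else 0)
     + (\<Sum>i<n. \<Sum>c<n. \<Sum>j<n. if i<c \<and> c<j then f i j c else 0)
     + (\<Sum>c<n. \<Sum>i<n. \<Sum>j<n. if c<i \<and> i<j then f i j c else 0)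
     = (\<Sum>u<n. \<Sum>v<n. \<Sum>w<n. if u<v \<and> v<w then f u v w + f u w v + f v w u else 0)"
    by (simp add: sum.distrib[symmetric]) (intro sum.cong refl, auto)
  finally show ?thesis .
qed

lemma sum_four_swap:
  "(\<Sum>i<(n::nat). \<Sum>j<n. \<Sum>a<n. \<Sum>c<n. g i j a c) = (\<Sum>i<n. \<Sum>j<n. \<Sum>a<n. \<Sum>c<n. (g a c i j::'a::comm_monoid_add))"
proof -
  have e: "\<And>h. (\<Sum>i<n. \<Sum>j<n. h i j) = (\<Sum>p\<in>{..<n}\<times>{..<n}. h (fst p) (snd p))"
    by (simp add: sum.cartesian_product case_prod_beta)
  have "(\<Sum>i<(n::nat). \<Sum>j<n. \<Sum>a<n. \<Sum>c<n. g i j a c)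
     = (\<Sum>p\<in>{..<n}\<times>{..<n}. \<Sum>q\<in>{..<n}\<times>{..<n}. g (fst p) (snd p) (fst q) (snd q))"
    by (simp add: e)
  also have "\<dots> = (\<Sum>q\<in>{..<n}\<times>{..<n}. \<Sum>p\<in>{..<n}\<times>{..<n}. g (fst p) (snd p) (fst q) (snd q))"
    by (rule sum.swap)
  also have "\<dots> = (\<Sum>i<n. \<Sum>j<n. \<Sum>a<n. \<Sum>c<n. g a c i j)"
    by (simp add: e)
  finally show ?thesis .
qed

lemma minus_sum_minus_plus: "- (\<Sum>i\<in>I. c i * (- A i + B i)) = (\<Sum>i\<in>I. c i * A i) - (\<Sum>i\<in>I. (c i * B i :: 'a::comm_ring_1))"
  by (simp add: sum_subtractf[symmetric] sum_negf[symmetric] algebra_simps)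

lemma sum_lin_comb:
  assumes "\<And>i. i \<in> I \<Longrightarrow> f i = a * g i + h i"
  shows "(\<Sum>i\<in>I. f i) = a * (\<Sum>i\<in>I. g i) + (\<Sum>i\<in>I. h i :: 'a::comm_semiring_1)"
  using assms by (simp add: sum.distrib sum_distrib_left)

lemma sum_inner_shift: "(\<Sum>j\<in>{Suc (Suc i)..k}. g j) = (\<Sum>j<k. if i < j then g (Suc j) else (0::'a::comm_monoid_add))"
proof -
  have "{Suc (Suc i)..k} = Suc ` {Suc i..<k}" by (auto simp: image_iff)
  then have "(\<Sum>j\<in>{Suc (Suc i)..k}. g j) = (\<Sum>j\<in>Suc ` {Suc i..<k}. g j)" by (simp only:)
  also have "\<dots> = (\<Sum>j\<in>{Suc i..<k}. g (Suc j))" by (subst sum.reindex) auto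
  also have "{Suc i..<k} = {j\<in>{..<k}. i < j}" by auto
  also have "(\<Sum>j\<in>{j\<in>{..<k}. i < j}. g (Suc j)) = (\<Sum>j<k. if i < j then g (Suc j) else 0)"
    by (rule sum.inter_filter) simp
  finally show ?thesis .
qed

section \<open>The pre-Lie cochain differential\<close>

text \<open>
  The pre-Lie cochain differential with trivial coefficients, for a product \<open>m\<close> (playing
  \<cdot>_r) and a bracket \<open>b\<close> (playing [-,-]_r). The cochain \<open>\<Phi> ys z\<close> takes its last
  argument separately. Indices are 0-based, which turns the paper's signs (-1)^(i+1) into
  (-1)^i and leaves (-1)^(i+j) unchanged.
\<close>

definition prelie_diff :: "('v \<Rightarrow> 'v \<Rightarrow> 'v) \<Rightarrow> ('v \<Rightarrow> 'v \<Rightarrow> 'v) \<Rightarrow> ('v list \<Rightarrow> 'v \<Rightarrow> 'a::comm_ring_1)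
   \<Rightarrow> 'v list \<Rightarrow> 'v \<Rightarrow> 'a" where
  "prelie_diff m b \<Phi> ys z = - (\<Sum>i<length ys. (-1)^i * \<Phi> (nths ys (-{i})) (m (ys!i) z))
     + (\<Sum>i<length ys. \<Sum>j<length ys. if i<j then (-1)^(i+j) * \<Phi> (b (ys!i) (ys!j) # nths ys (-{i,j})) z else 0)"

lemma prelie_diff_nths:
  "prelie_diff m b \<Phi> (nths ys A) z =
     - (\<Sum>l\<in>{l\<in>A. l<length ys}. (-1)^pos_in A l * \<Phi> (nths ys (A - {l})) (m (ys!l) z))
     + (\<Sum>l\<in>{l\<in>A. l<length ys}. \<Sum>l'\<in>{l\<in>A. l<length ys}. if l<l' then (-1)^(pos_in A l + pos_in A l') *
          \<Phi> (b (ys!l) (ys!l') # nths ys (A - {l,l'})) z else 0)"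
proof -
  let ?L = "{l\<in>A. l<length ys}"
  have 1: "(\<Sum>i<length (nths ys A). (-1)^i * \<Phi> (nths (nths ys A) (-{i})) (m (nths ys A!i) z))
     = (\<Sum>l\<in>?L. (-1)^pos_in A l * \<Phi> (nths ys (A - {l})) (m (ys!l) z))"
    unfolding sum_pos_in by (rule sum.cong) (auto simp: nths_nths_del1 nth_nths_pos_in)
  have 2: "(\<Sum>i<length (nths ys A). \<Sum>j<length (nths ys A). if i<j then (-1)^(i+j) *
          \<Phi> (b (nths ys A!i) (nths ys A!j) # nths (nths ys A) (-{i,j})) z else 0)
     = (\<Sum>l\<in>?L. \<Sum>l'\<in>?L. if l<l' then (-1)^(pos_in A l + pos_in A l') *
          \<Phi> (b (ys!l) (ys!l') # nths ys (A - {l,l'})) z else 0)"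
    unfolding sum_pos_in by (intro sum.cong refl) (auto simp: nths_nths_del2 nth_nths_pos_in pos_in_less_iff)
  show ?thesis unfolding prelie_diff_def 1 2 ..
qed

lemma prelie_diff_Cons:
  "prelie_diff m b \<Phi> (x # ws) z = - \<Phi> ws (m x z)
     + (\<Sum>a<length ws. (-1)^a * \<Phi> (x # nths ws (-{a})) (m (ws!a) z))
     - (\<Sum>c<length ws. (-1)^c * \<Phi> (b x (ws!c) # nths ws (-{c})) z)
     + (\<Sum>a<length ws. \<Sum>c<length ws. if a<c then (-1)^(a+c) * \<Phi> (b (ws!a) (ws!c) # x # nths ws (-{a,c})) z else 0)"
proof -
  have 1: "(\<Sum>i<length (x#ws). (-1)^i * \<Phi> (nths (x#ws) (-{i})) (m ((x#ws)!i) z))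
     = \<Phi> ws (m x z) - (\<Sum>a<length ws. (-1)^a * \<Phi> (x # nths ws (-{a})) (m (ws!a) z))"
    by (simp only: length_Cons sum.lessThan_Suc_shift)
      (simp add: nths_Cons_compl0 nths_Cons_complSuc sum_negf)
  have 2: "(\<Sum>i<length (x#ws). \<Sum>j<length (x#ws). if i<j then (-1)^(i+j) *
          \<Phi> (b ((x#ws)!i) ((x#ws)!j) # nths (x#ws) (-{i,j})) z else 0)
     = - (\<Sum>c<length ws. (-1)^c * \<Phi> (b x (ws!c) # nths ws (-{c})) z)
     + (\<Sum>a<length ws. \<Sum>c<length ws. if a<c then (-1)^(a+c) * \<Phi> (b (ws!a) (ws!c) # x # nths ws (-{a,c})) z else 0)"
    unfolding length_Cons sum.lessThan_Suc_shift
    by (simp add: nths_Cons_compl0Suc nths_Cons_complSucSuc sum_negf cong: if_cong)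
  show ?thesis unfolding prelie_diff_def 1 2 by simp
qed

lemma prelie_diff_Cons_nths:
  "prelie_diff m b \<Phi> (x # nths ys A) z = - \<Phi> (nths ys A) (m x z)
     + (\<Sum>l\<in>{l\<in>A. l<length ys}. (-1)^pos_in A l * \<Phi> (x # nths ys (A - {l})) (m (ys!l) z))
     - (\<Sum>l\<in>{l\<in>A. l<length ys}. (-1)^pos_in A l * \<Phi> (b x (ys!l) # nths ys (A - {l})) z)
     + (\<Sum>l\<in>{l\<in>A. l<length ys}. \<Sum>l'\<in>{l\<in>A. l<length ys}. if l<l' then (-1)^(pos_in A l + pos_in A l') *
          \<Phi> (b (ys!l) (ys!l') # x # nths ys (A - {l,l'})) z else 0)"
proof -
  let ?L = "{l\<in>A. l<length ys}"
  have 1: "(\<Sum>a<length (nths ys A). (-1)^a * \<Phi> (x # nths (nths ys A) (-{a})) (m (nths ys A!a) z))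
     = (\<Sum>l\<in>?L. (-1)^pos_in A l * \<Phi> (x # nths ys (A - {l})) (m (ys!l) z))"
    unfolding sum_pos_in by (rule sum.cong) (auto simp: nths_nths_del1 nth_nths_pos_in)
  have 2: "(\<Sum>a<length (nths ys A). (-1)^a * \<Phi> (b x (nths ys A!a) # nths (nths ys A) (-{a})) z)
     = (\<Sum>l\<in>?L. (-1)^pos_in A l * \<Phi> (b x (ys!l) # nths ys (A - {l})) z)"
    unfolding sum_pos_in by (rule sum.cong) (auto simp: nths_nths_del1 nth_nths_pos_in)
  have 3: "(\<Sum>i<length (nths ys A). \<Sum>j<length (nths ys A). if i<j then (-1)^(i+j) *
          \<Phi> (b (nths ys A!i) (nths ys A!j) # x # nths (nths ys A) (-{i,j})) z else 0)
     = (\<Sum>l\<in>?L. \<Sum>l'\<in>?L. if l<l' then (-1)^(pos_in A l + pos_in A l') *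
          \<Phi> (b (ys!l) (ys!l') # x # nths ys (A - {l,l'})) z else 0)"
    unfolding sum_pos_in by (intro sum.cong refl) (auto simp: nths_nths_del2 nth_nths_pos_in pos_in_less_iff)
  show ?thesis unfolding prelie_diff_Cons 1 2 3 ..
qed

lemma prelie_diff_delete1:
  "prelie_diff m b \<Phi> (nths ys (-{i})) z = 
     -(\<Sum>l<length ys. if l = i then 0 else (-1)^l * shift_sign i l * \<Phi> (nths ys (-{i,l})) (m (ys!l) z))
     + (\<Sum>l<length ys. \<Sum>l'<length ys. if l \<noteq> i \<and> l' \<noteq> i \<and> l < l' then (-1)^(l+l') * (shift_sign i l * shift_sign i l') *
            \<Phi> (b (ys!l) (ys!l') # nths ys (-{i,l,l'})) z else 0)"
  unfolding prelie_diff_nths sum_restrict_compl Compl_Diff_eq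
  apply (intro arg_cong2[where f="(+)"] arg_cong[where f=uminus] sum.cong refl)
  subgoal for l by (simp add: minus_one_pow_pos_in_compl1 insert_commute)
  subgoal for l
    by (cases "l = i")
      (auto intro!: sum.cong simp: minus_one_pow_pos_in_compl1 power_add mult_ac insert_commute)
  done

lemma prelie_diff_cons_delete2:
  assumes "i \<noteq> j"
  shows "prelie_diff m b \<Phi> (B # nths ys (-{i,j})) z = - \<Phi> (nths ys (-{i,j})) (m B z)
     + (\<Sum>a<length ys. if a = i \<or> a = j then 0 else (-1)^a * (shift_sign i a * shift_sign j a) * \<Phi> (B # nths ys (-{i,j,a})) (m (ys!a) z))
     - (\<Sum>c<length ys. if c = i \<or> c = j then 0 else (-1)^c * (shift_sign i c * shift_sign j c) * \<Phi> (b B (ys!c) # nths ys (-{i,j,c})) z)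
     + (\<Sum>a<length ys. \<Sum>c<length ys. if a \<noteq> i \<and> a \<noteq> j \<and> c \<noteq> i \<and> c \<noteq> j \<and> a < c then
          (-1)^(a+c) * ((shift_sign i a * shift_sign j a) * (shift_sign i c * shift_sign j c)) * \<Phi> (b (ys!a) (ys!c) # B # nths ys (-{i,j,a,c})) z else 0)"
  unfolding prelie_diff_Cons_nths sum_restrict_compl Compl_Diff_eq
  apply (intro arg_cong2[where f="(+)"] arg_cong2[where f="(-)"] sum.cong refl)
  subgoal for a using assms by (auto simp: minus_one_pow_pos_in_compl2 insert_commute)
  subgoal for c using assms by (auto simp: minus_one_pow_pos_in_compl2 insert_commute)
  subgoal for a
    using assms
    by (cases "a = i \<or> a = j")
      (auto intro!: sum.cong simp: minus_one_pow_pos_in_compl2 power_add mult_ac insert_commute)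
  done

lemma cancel_prelie_terms:
  fixes G :: "nat \<Rightarrow> nat \<Rightarrow> 'v \<Rightarrow> 'a::comm_ring_1"
  assumes sym: "\<And>i l. G i l = G l i"
    and P: "\<And>i l x y. i < n \<Longrightarrow> l < n \<Longrightarrow> i \<noteq> l \<Longrightarrow>
          G i l (m x (m y z)) - G i l (m y (m x z)) = G i l (m (b x y) z)"
  shows "(\<Sum>i<n. (-1)^i * (\<Sum>l<n. if l = i then 0 else (-1)^l * shift_sign i l * G i l (m (y l) (m (y i) z))))
       + (\<Sum>i<n. \<Sum>j<n. if i<j then (-1)^(i+j) * (- G i j (m (b (y i) (y j)) z)) else 0) = 0"
proof -
  define h where "h i l = (-1)^i * ((-1)^l * shift_sign i l * G i l (m (y l) (m (y i) z)))" for i l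
  have 1: "(\<Sum>i<n. (-1)^i * (\<Sum>l<n. if l = i then 0 else (-1)^l * shift_sign i l * G i l (m (y l) (m (y i) z))))
      = (\<Sum>i<n. \<Sum>l<n. if l = i then 0 else h i l)"
    unfolding sum_distrib_left h_def by (intro sum.cong refl) auto
  have 2: "h i l + h l i = (-1)^(i+l) * G i l (m (b (y i) (y l)) z)" if "i < l" "l < n" for i l
  proof -
    have "h i l + h l i = (-1)^(i+l) * (G i l (m (y i) (m (y l) z)) - G i l (m (y l) (m (y i) z)))"
      using that unfolding h_def shift_sign_def by (simp add: sym[of l i] power_add algebra_simps)
    also have "\<dots> = (-1)^(i+l) * G i l (m (b (y i) (y l)) z)"
      using P[of i l "y i" "y l"] that by simp
    finally show ?thesis .
  qed
  have "(\<Sum>i<n. \<Sum>l<n. if l = i then 0 else h i l) = (\<Sum>i<n. \<Sum>l<n. if i<l then (-1)^(i+l) * G i l (m (b (y i) (y l)) z) else 0)"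
    unfolding sum_pairs by (intro sum.cong refl) (auto simp: 2)
  then show ?thesis unfolding 1
    by (simp add: sum.distrib[symmetric] sum_negf[symmetric]) (intro sum.neutral ballI, simp)
qed

lemma cancel_mixed_terms:
  fixes H :: "nat \<Rightarrow> nat \<Rightarrow> nat \<Rightarrow> 'a::comm_ring_1"
  shows "- (\<Sum>a<n. (-1)^a * (\<Sum>i<n. \<Sum>j<n. if i \<noteq> a \<and> j \<noteq> a \<and> i < j then (-1)^(i+j) * (shift_sign a i * shift_sign a j) * H a i j else 0))
     + (\<Sum>i<n. \<Sum>j<n. if i<j then (-1)^(i+j) * (\<Sum>a<n. if a = i \<or> a = j then 0 else (-1)^a * (shift_sign i a * shift_sign j a) * H a i j) else 0) = 0"
proof -
  define F where "F a i j = (if i \<noteq> a \<and> j \<noteq> a \<and> i < j then (-1)^(a+i+j) * (shift_sign a i * shift_sign a j) * H a i j else 0)" for a i j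
  have 1: "(\<Sum>a<n. (-1)^a * (\<Sum>i<n. \<Sum>j<n. if i \<noteq> a \<and> j \<noteq> a \<and> i < j then (-1)^(i+j) * (shift_sign a i * shift_sign a j) * H a i j else 0))
     = (\<Sum>a<n. \<Sum>i<n. \<Sum>j<n. F a i j)"
    unfolding sum_distrib_left F_def by (intro sum.cong refl) (auto simp: power_add mult_ac)
  have pw: "(if i<j then (-1)^(i+j) * (\<Sum>a<n. if a = i \<or> a = j then 0 else (-1)^a * (shift_sign i a * shift_sign j a) * H a i j) else 0)
     = (\<Sum>a<n. F a i j)" for i j
  proof (cases "i < j")
    case False then show ?thesis by (simp add: F_def)
  next
    case True
    have "(-1)^(i+j) * (if a = i \<or> a = j then 0 else (-1)^a * (shift_sign i a * shift_sign j a) * H a i j) = F a i j" for a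
    proof (cases "a = i \<or> a = j")
      case True then show ?thesis by (auto simp: F_def)
    next
      case False
      then have "shift_sign a i * shift_sign a j = (shift_sign i a * shift_sign j a :: 'a)" by (intro shift_sign_pair_swap) auto
      then show ?thesis using False \<open>i<j\<close> unfolding F_def by (simp add: power_add mult_ac)
    qed
    then show ?thesis using True by (simp add: sum_distrib_left)
  qed
  have "(\<Sum>i<n. \<Sum>j<n. if i<j then (-1)^(i+j) * (\<Sum>a<n. if a = i \<or> a = j then 0 else (-1)^a * (shift_sign i a * shift_sign j a) * H a i j) else 0)
     = (\<Sum>i<n. \<Sum>j<n. \<Sum>a<n. F a i j)"
    unfolding pw ..
  also have "\<dots> = (\<Sum>i<n. \<Sum>a<n. \<Sum>j<n. F a i j)"
    by (rule sum.cong[OF refl], rule sum.swap)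
  also have "\<dots> = (\<Sum>a<n. \<Sum>i<n. \<Sum>j<n. F a i j)"
    by (rule sum.swap)
  finally show ?thesis unfolding 1 by simp
qed

lemma cancel_jacobi_terms:
  fixes K :: "nat \<Rightarrow> nat \<Rightarrow> nat \<Rightarrow> 'a::comm_ring_1"
  assumes J: "\<And>u v w. u<v \<Longrightarrow> v<w \<Longrightarrow> w<n \<Longrightarrow> K u v w - K u w v + K v w u = 0"
  shows "(\<Sum>i<n. \<Sum>j<n. if i<j then (-1)^(i+j) * (- (\<Sum>c<n. if c = i \<or> c = j then 0 else (-1)^c * (shift_sign i c * shift_sign j c) * K i j c)) else 0) = 0"
proof -
  define f where "f i j c = - ((-1)^(i+j+c) * (shift_sign i c * shift_sign j c) * K i j c)" for i j c
  have pw: "(if i<j then (-1)^(i+j) * (- (\<Sum>c<n. if c = i \<or> c = j then 0 else (-1)^c * (shift_sign i c * shift_sign j c) * K i j c)) else 0)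
     = (\<Sum>c<n. if i<j \<and> c\<noteq>i \<and> c\<noteq>j then f i j c else 0)" for i j
  proof (cases "i<j")
    case False then show ?thesis by simp
  next
    case True
    show ?thesis unfolding if_P[OF True] f_def sum_distrib_left sum_negf[symmetric] mult_minus_right
      by (intro sum.cong refl) (use True in \<open>auto simp: power_add mult_ac\<close>)
  qed
  have "(\<Sum>i<n. \<Sum>j<n. if i<j then (-1)^(i+j) * (- (\<Sum>c<n. if c = i \<or> c = j then 0 else (-1)^c * (shift_sign i c * shift_sign j c) * K i j c)) else 0)
      = (\<Sum>u<n. \<Sum>v<n. \<Sum>w<n. if u<v \<and> v<w then f u v w + f u w v + f v w u else 0)"
    unfolding pw sum_triples ..
  also have "\<dots> = 0"
  proof (intro sum.neutral ballI)
    fix u v w assume "u \<in> {..<n}" "v \<in> {..<n}" "w \<in> {..<n}"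
    show "(if u<v \<and> v<w then f u v w + f u w v + f v w u else 0) = 0"
    proof (cases "u<v \<and> v<w")
      case True
      have "f u v w + f u w v + f v w u = - ((-1)^(u+v+w) * (K u v w - K u w v + K v w u))"
        using True unfolding f_def shift_sign_def by (simp add: algebra_simps add_ac)
      then show ?thesis using J[of u v w] True \<open>w \<in> {..<n}\<close> by simp
    qed auto
  qed
  finally show ?thesis .
qed

lemma cancel_antisym_terms:
  fixes L :: "nat \<Rightarrow> nat \<Rightarrow> nat \<Rightarrow> nat \<Rightarrow> 'a::field_char_0"
  assumes A: "\<And>i j a c. i<j \<Longrightarrow> a<c \<Longrightarrow> a \<noteq> i \<Longrightarrow> a \<noteq> j \<Longrightarrow> c \<noteq> i \<Longrightarrow> c \<noteq> j \<Longrightarrow> j < n \<Longrightarrow> c < n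
        \<Longrightarrow> L i j a c = - L a c i j"
  shows "(\<Sum>i<n. \<Sum>j<n. if i<j then (-1)^(i+j) * (\<Sum>a<n. \<Sum>c<n. if a \<noteq> i \<and> a \<noteq> j \<and> c \<noteq> i \<and> c \<noteq> j \<and> a < c then
          (-1)^(a+c) * ((shift_sign i a * shift_sign j a) * (shift_sign i c * shift_sign j c)) * L i j a c else 0) else 0) = 0"
proof -
  define g where "g i j a c = (if i<j \<and> a<c \<and> a \<noteq> i \<and> a \<noteq> j \<and> c \<noteq> i \<and> c \<noteq> j then
          (-1)^(i+j+a+c) * ((shift_sign i a * shift_sign j a) * (shift_sign i c * shift_sign j c)) * L i j a c else 0)" for i j a c
  have pw: "(if i<j then (-1)^(i+j) * (\<Sum>a<n. \<Sum>c<n. if a \<noteq> i \<and> a \<noteq> j \<and> c \<noteq> i \<and> c \<noteq> j \<and> a < c then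
          (-1)^(a+c) * ((shift_sign i a * shift_sign j a) * (shift_sign i c * shift_sign j c)) * L i j a c else 0) else 0)
     = (\<Sum>a<n. \<Sum>c<n. g i j a c)" for i j
  proof (cases "i<j")
    case False then show ?thesis by (simp add: g_def)
  next
    case True
    show ?thesis unfolding if_P[OF True] g_def sum_distrib_left
      by (intro sum.cong refl) (use True in \<open>auto simp: power_add mult_ac\<close>)
  qed
  define S where "S = (\<Sum>i<n. \<Sum>j<n. \<Sum>a<n. \<Sum>c<n. g i j a c)"
  have anti: "g a c i j = - g i j a c" if "i<n" "j<n" "a<n" "c<n" for i j a c
  proof (cases "i<j \<and> a<c \<and> a \<noteq> i \<and> a \<noteq> j \<and> c \<noteq> i \<and> c \<noteq> j")
    case True
    have s: "(shift_sign a i * shift_sign c i) * (shift_sign a j * shift_sign c j) = ((shift_sign i a * shift_sign j a) * (shift_sign i c * shift_sign j c) :: 'a)"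
    proof -
      have e1: "shift_sign a i = (- shift_sign i a :: 'a)" using True by (intro shift_sign_swap) auto
      have e2: "shift_sign c i = (- shift_sign i c :: 'a)" using True by (intro shift_sign_swap) auto
      have e3: "shift_sign a j = (- shift_sign j a :: 'a)" using True by (intro shift_sign_swap) auto
      have e4: "shift_sign c j = (- shift_sign j c :: 'a)" using True by (intro shift_sign_swap) auto
      show ?thesis by (simp only: e1 e2 e3 e4) (simp add: mult_ac)
    qed
    have Lr: "L a c i j = - L i j a c" using A[of i j a c] True that by simp
    have c2: "a<c \<and> i<j \<and> i \<noteq> a \<and> i \<noteq> c \<and> j \<noteq> a \<and> j \<noteq> c" using True by auto
    have p: "(-1::'a)^(a+c+i+j) = (-1)^(i+j+a+c)" by (simp only: add_ac)
    have "g a c i j = (-1)^(i+j+a+c) * ((shift_sign i a * shift_sign j a) * (shift_sign i c * shift_sign j c)) * (- L i j a c)"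
      unfolding g_def if_P[OF c2] p s Lr ..
    also have "\<dots> = - g i j a c" unfolding g_def if_P[OF True] by simp
    finally show ?thesis .
  next
    case False then show ?thesis unfolding g_def by auto
  qed
  have "S = (\<Sum>i<n. \<Sum>j<n. \<Sum>a<n. \<Sum>c<n. g a c i j)" unfolding S_def by (rule sum_four_swap)
  also have "\<dots> = (\<Sum>i<n. \<Sum>j<n. \<Sum>a<n. \<Sum>c<n. - g i j a c)"
    by (intro sum.cong refl) (rule anti, auto)
  also have "\<dots> = - S" unfolding S_def by (simp add: sum_negf)
  finally have "S = 0" by simp
  then show ?thesis unfolding pw S_def .
qed

theorem prelie_diff_squared:
  fixes \<Phi> :: "'v list \<Rightarrow> 'v \<Rightarrow> 'a::field_char_0"
  assumes len: "length ys = p + 2"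
    and P: "\<And>ws x y z. length ws = p \<Longrightarrow> \<Phi> ws (m x (m y z)) - \<Phi> ws (m y (m x z)) = \<Phi> ws (m (b x y) z)"
    and J: "\<And>ws x y w z. 1 \<le> p \<Longrightarrow> length ws = p - 1 \<Longrightarrow>
              \<Phi> (b (b x y) w # ws) z - \<Phi> (b (b x w) y # ws) z + \<Phi> (b (b y w) x # ws) z = 0"
    and A: "\<And>x y ws z. 2 \<le> p \<Longrightarrow> length ws = p - 2 \<Longrightarrow> \<Phi> (x # y # ws) z = - \<Phi> (y # x # ws) z"
  shows "prelie_diff m b (prelie_diff m b \<Phi>) ys z = 0"
proof -
  define n where "n = length ys"
  define y where "y = (!) ys"
  define G where "G i l = \<Phi> (nths ys (-{i,l}))" for i l
  define H where "H a i j = \<Phi> (b (y i) (y j) # nths ys (-{a,i,j})) (m (y a) z)" for a i j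
  define K where "K i j c = \<Phi> (b (b (y i) (y j)) (y c) # nths ys (-{i,j,c})) z" for i j c
  define L where "L i j a c = \<Phi> (b (y a) (y c) # b (y i) (y j) # nths ys (-{i,j,a,c})) z" for i j a c
  define c1a where "c1a = (\<Sum>i<n. (-1)^i * (\<Sum>l<n. if l = i then 0 else (-1)^l * shift_sign i l * G i l (m (y l) (m (y i) z))))"
  define c1b where "c1b = (\<Sum>i<n. \<Sum>j<n. if i<j then (-1)^(i+j) * (- G i j (m (b (y i) (y j)) z)) else 0)"
  define c2a where "c2a = - (\<Sum>a<n. (-1)^a * (\<Sum>i<n. \<Sum>j<n. if i \<noteq> a \<and> j \<noteq> a \<and> i < j then (-1)^(i+j) * (shift_sign a i * shift_sign a j) * H a i j else 0))"
  define c2b where "c2b = (\<Sum>i<n. \<Sum>j<n. if i<j then (-1)^(i+j) * (\<Sum>a<n. if a = i \<or> a = j then 0 else (-1)^a * (shift_sign i a * shift_sign j a) * H a i j) else 0)"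
  define c3 where "c3 = (\<Sum>i<n. \<Sum>j<n. if i<j then (-1)^(i+j) * (- (\<Sum>c<n. if c = i \<or> c = j then 0 else (-1)^c * (shift_sign i c * shift_sign j c) * K i j c)) else 0)"
  define c4 where "c4 = (\<Sum>i<n. \<Sum>j<n. if i<j then (-1)^(i+j) * (\<Sum>a<n. \<Sum>c<n. if a \<noteq> i \<and> a \<noteq> j \<and> c \<noteq> i \<and> c \<noteq> j \<and> a < c then
          (-1)^(a+c) * ((shift_sign i a * shift_sign j a) * (shift_sign i c * shift_sign j c)) * L i j a c else 0) else 0)"
  have first: "- (\<Sum>i<n. (-1)^i * prelie_diff m b \<Phi> (nths ys (-{i})) (m (ys!i) z)) = c1a + c2a"
  proof -
    have "- (\<Sum>i<n. (-1)^i * prelie_diff m b \<Phi> (nths ys (-{i})) (m (ys!i) z))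
       = (\<Sum>i<n. (-1)^i * (\<Sum>l<n. if l = i then 0 else (-1)^l * shift_sign i l * G i l (m (y l) (m (y i) z))))
         - (\<Sum>i<n. (-1)^i * (\<Sum>l<n. \<Sum>l'<n. if l \<noteq> i \<and> l' \<noteq> i \<and> l < l' then (-1)^(l+l') * (shift_sign i l * shift_sign i l') * H i l l' else 0))"
      unfolding prelie_diff_delete1 n_def[symmetric] G_def H_def y_def
      by (rule minus_sum_minus_plus)
    then show ?thesis unfolding c1a_def c2a_def by simp
  qed
  have second: "(\<Sum>i<n. \<Sum>j<n. if i<j then (-1)^(i+j) * prelie_diff m b \<Phi> (b (ys!i) (ys!j) # nths ys (-{i,j})) z else 0)
      = c1b + c2b + c3 + c4"
  proof -
    have pw: "(if i<j then (-1)^(i+j) * prelie_diff m b \<Phi> (b (ys!i) (ys!j) # nths ys (-{i,j})) z else 0)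
       = (if i<j then (-1)^(i+j) * (- G i j (m (b (y i) (y j)) z)) else 0)
       + (if i<j then (-1)^(i+j) * (\<Sum>a<n. if a = i \<or> a = j then 0 else (-1)^a * (shift_sign i a * shift_sign j a) * H a i j) else 0)
       + (if i<j then (-1)^(i+j) * (- (\<Sum>c<n. if c = i \<or> c = j then 0 else (-1)^c * (shift_sign i c * shift_sign j c) * K i j c)) else 0)
       + (if i<j then (-1)^(i+j) * (\<Sum>a<n. \<Sum>c<n. if a \<noteq> i \<and> a \<noteq> j \<and> c \<noteq> i \<and> c \<noteq> j \<and> a < c then
          (-1)^(a+c) * ((shift_sign i a * shift_sign j a) * (shift_sign i c * shift_sign j c)) * L i j a c else 0) else 0)" for i j
    proof (cases "i < j")
      case True
      then have ij: "i \<noteq> j" by simp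
      have s1: "(\<Sum>a<n. if a = i \<or> a = j then 0 else (-1)^a * (shift_sign i a * shift_sign j a) * \<Phi> (b (ys!i) (ys!j) # nths ys (-{i,j,a})) (m (ys!a) z))
          = (\<Sum>a<n. if a = i \<or> a = j then 0 else (-1)^a * (shift_sign i a * shift_sign j a) * H a i j)"
        unfolding H_def y_def by (intro sum.cong refl) (simp add: insert_commute)
      show ?thesis unfolding if_P[OF True] prelie_diff_cons_delete2[OF ij] n_def[symmetric] s1
        unfolding G_def K_def L_def y_def by (simp add: algebra_simps)
    qed simp
    show ?thesis unfolding pw sum.distrib c1b_def c2b_def c3_def c4_def ..
  qed
  have "prelie_diff m b (prelie_diff m b \<Phi>) ys z = c1a + c1b + (c2a + c2b) + c3 + c4"
    unfolding prelie_diff_def[of m b "prelie_diff m b \<Phi>" ys z] n_def[symmetric] first second by simp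
  also have "c1a + c1b = 0" unfolding c1a_def c1b_def
  proof (rule cancel_prelie_terms)
    show "G i l = G l i" for i l unfolding G_def by (simp add: insert_commute)
    show "G i l (m x (m y' z)) - G i l (m y' (m x z)) = G i l (m (b x y') z)"
      if "i < n" "l < n" "i \<noteq> l" for i l x y'
      unfolding G_def using that len n_def by (intro P) (simp add: length_nths_compl)
  qed
  also have "c2a + c2b = 0" unfolding c2a_def c2b_def by (rule cancel_mixed_terms)
  also have "c3 = 0" unfolding c3_def
  proof (rule cancel_jacobi_terms)
    fix u v w assume uvw: "u < v" "v < w" "w < n"
    have s1: "-{u,w,v} = -{u,v,w}" "-{v,w,u} = -{u,v,w}" by auto
    have "length (nths ys (-{u,v,w})) = p - 1" using uvw len n_def by (simp add: length_nths_compl)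
    moreover have "1 \<le> p" using uvw len n_def by simp
    ultimately show "K u v w - K u w v + K v w u = 0" unfolding K_def s1 by (rule J[rotated])
  qed
  also have "c4 = 0" unfolding c4_def
  proof (rule cancel_antisym_terms)
    fix i j a c assume h: "i<j" "a<c" "a \<noteq> i" "a \<noteq> j" "c \<noteq> i" "c \<noteq> j" "j < n" "c < n"
    have s1: "-{a,c,i,j} = -{i,j,a,c}" by auto
    have "length (nths ys (-{i,j,a,c})) = p - 2" using h len n_def by (simp add: length_nths_compl)
    moreover have "2 \<le> p" using h len n_def by simp
    ultimately show "L i j a c = - L a c i j" unfolding L_def s1 by (intro A)
  qed
  finally show ?thesis by simp
qed

lemma prelie_diff_cong:
  assumes "\<And>ws t. length ws = length ys - 1 \<Longrightarrow> \<Phi> ws t = \<Phi>' ws t"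
  shows "prelie_diff m b \<Phi> ys z = prelie_diff m b \<Phi>' ys z"
proof -
  have 1: "\<Phi> (nths ys (-{i})) (m (ys!i) z) = \<Phi>' (nths ys (-{i})) (m (ys!i) z)" if "i < length ys" for i
    using that by (intro assms) (simp add: length_nths_compl_singleton)
  have 2: "\<Phi> (b (ys!i) (ys!j) # nths ys (-{i,j})) z = \<Phi>' (b (ys!i) (ys!j) # nths ys (-{i,j})) z"
    if "i < j" "j < length ys" for i j
  proof -
    have "length (nths ys (-{i,j})) = length ys - card {i,j}" using that by (intro length_nths_compl) auto
    then show ?thesis using that by (intro assms) auto
  qed
  show ?thesis unfolding prelie_diff_def
    by (intro arg_cong2[where f="(+)"] arg_cong[where f=uminus] sum.cong refl) (auto simp: 1 2)
qed

lemma prelie_diff_lin_last: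
  fixes \<Phi> :: "('n \<Rightarrow> 'a::field) list \<Rightarrow> ('n \<Rightarrow> 'a) \<Rightarrow> 'a"
  assumes mlin: "\<And>x u v. m x (\<lambda>j. a * u j + v j) = (\<lambda>j. a * m x u j + m x v j)"
    and Plin: "\<And>ws u v. length ws = length ys - 1 \<Longrightarrow> \<Phi> ws (\<lambda>j. a * u j + v j) = a * \<Phi> ws u + \<Phi> ws v"
  shows "prelie_diff m b \<Phi> ys (\<lambda>j. a * u j + v j) = a * prelie_diff m b \<Phi> ys u + prelie_diff m b \<Phi> ys v"
proof -
  let ?n = "length ys" and ?x = "\<lambda>j. a * u j + v j"
  have "(\<Sum>i<?n. (-1)^i * \<Phi> (nths ys (-{i})) (m (ys!i) ?x))
     = a * (\<Sum>i<?n. (-1)^i * \<Phi> (nths ys (-{i})) (m (ys!i) u))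
       + (\<Sum>i<?n. (-1)^i * \<Phi> (nths ys (-{i})) (m (ys!i) v))"
    by (rule sum_lin_comb)
      (simp add: mlin Plin length_nths_compl_singleton, simp add: algebra_simps)
  moreover have "(\<Sum>i<?n. \<Sum>l<?n. if i<l then (-1)^(i+l) * \<Phi> (b (ys!i) (ys!l) # nths ys (-{i,l})) ?x else 0)
     = a * (\<Sum>i<?n. \<Sum>l<?n. if i<l then (-1)^(i+l) * \<Phi> (b (ys!i) (ys!l) # nths ys (-{i,l})) u else 0)
       + (\<Sum>i<?n. \<Sum>l<?n. if i<l then (-1)^(i+l) * \<Phi> (b (ys!i) (ys!l) # nths ys (-{i,l})) v else 0)"
  proof (intro sum_lin_comb)
    fix i l assume il: "i \<in> {..<?n}" "l \<in> {..<?n}"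
    show "(if i<l then (-1)^(i+l) * \<Phi> (b (ys!i) (ys!l) # nths ys (-{i,l})) ?x else 0)
      = a * (if i<l then (-1)^(i+l) * \<Phi> (b (ys!i) (ys!l) # nths ys (-{i,l})) u else 0)
        + (if i<l then (-1)^(i+l) * \<Phi> (b (ys!i) (ys!l) # nths ys (-{i,l})) v else 0)"
    proof (cases "i < l")
      case True
      with il have "length (nths ys (-{i,l})) = ?n - card {i,l}" by (intro length_nths_compl) auto
      with True il have "length (b (ys!i) (ys!l) # nths ys (-{i,l})) = ?n - 1" by simp
      with True show ?thesis by (simp add: Plin, simp add: algebra_simps)
    qed simp
  qed
  ultimately show ?thesis unfolding prelie_diff_def by (simp add: algebra_simps)
qed

lemma prelie_diff_lin_first:
  fixes \<Phi> :: "('n \<Rightarrow> 'a::field) list \<Rightarrow> ('n \<Rightarrow> 'a) \<Rightarrow> 'a"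
  assumes m1: "\<And>u v t. m (\<lambda>j. a * u j + v j) t = (\<lambda>j. a * m u t j + m v t j)"
    and b1: "\<And>u v t. b (\<lambda>j. a * u j + v j) t = (\<lambda>j. a * b u t j + b v t j)"
    and Pz: "\<And>u v. \<Phi> ws (\<lambda>j. a * u j + v j) = a * \<Phi> ws u + \<Phi> ws v"
    and P0: "\<And>r t u v. length r = length ws - 1 \<Longrightarrow> 1 \<le> length ws \<Longrightarrow>
               \<Phi> ((\<lambda>j. a * u j + v j) # r) t = a * \<Phi> (u # r) t + \<Phi> (v # r) t"
    and P1: "\<And>B r t u v. length r = length ws - 2 \<Longrightarrow> 2 \<le> length ws \<Longrightarrow>
               \<Phi> (B # (\<lambda>j. a * u j + v j) # r) t = a * \<Phi> (B # u # r) t + \<Phi> (B # v # r) t"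
  shows "prelie_diff m b \<Phi> ((\<lambda>j. a * u j + v j) # ws) t
    = a * prelie_diff m b \<Phi> (u # ws) t + prelie_diff m b \<Phi> (v # ws) t"
proof -
  let ?n = "length ws" and ?x = "\<lambda>j. a * u j + v j"
  have "(\<Sum>i<?n. (-1)^i * \<Phi> (?x # nths ws (-{i})) (m (ws!i) t))
     = a * (\<Sum>i<?n. (-1)^i * \<Phi> (u # nths ws (-{i})) (m (ws!i) t))
       + (\<Sum>i<?n. (-1)^i * \<Phi> (v # nths ws (-{i})) (m (ws!i) t))"
    by (rule sum_lin_comb) (simp add: P0 length_nths_compl_singleton, simp add: algebra_simps)
  moreover have "(\<Sum>i<?n. (-1)^i * \<Phi> (b ?x (ws!i) # nths ws (-{i})) t)
     = a * (\<Sum>i<?n. (-1)^i * \<Phi> (b u (ws!i) # nths ws (-{i})) t)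
       + (\<Sum>i<?n. (-1)^i * \<Phi> (b v (ws!i) # nths ws (-{i})) t)"
    by (rule sum_lin_comb) (simp add: b1 P0 length_nths_compl_singleton, simp add: algebra_simps)
  moreover have "(\<Sum>i<?n. \<Sum>l<?n. if i<l then (-1)^(i+l) * \<Phi> (b (ws!i) (ws!l) # ?x # nths ws (-{i,l})) t else 0)
     = a * (\<Sum>i<?n. \<Sum>l<?n. if i<l then (-1)^(i+l) * \<Phi> (b (ws!i) (ws!l) # u # nths ws (-{i,l})) t else 0)
       + (\<Sum>i<?n. \<Sum>l<?n. if i<l then (-1)^(i+l) * \<Phi> (b (ws!i) (ws!l) # v # nths ws (-{i,l})) t else 0)"
  proof (intro sum_lin_comb)
    fix i l assume il: "i \<in> {..<?n}" "l \<in> {..<?n}"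
    show "(if i<l then (-1)^(i+l) * \<Phi> (b (ws!i) (ws!l) # ?x # nths ws (-{i,l})) t else 0)
      = a * (if i<l then (-1)^(i+l) * \<Phi> (b (ws!i) (ws!l) # u # nths ws (-{i,l})) t else 0)
        + (if i<l then (-1)^(i+l) * \<Phi> (b (ws!i) (ws!l) # v # nths ws (-{i,l})) t else 0)"
    proof (cases "i < l")
      case True
      with il have "length (nths ws (-{i,l})) = ?n - card {i,l}" by (intro length_nths_compl) auto
      with True il show ?thesis by (simp add: P1, simp add: algebra_simps)
    qed simp
  qed
  ultimately show ?thesis unfolding prelie_diff_Cons m1 Pz by (simp add: algebra_simps)
qed

section \<open>Coordinates and the dual operations\<close>

lemma pair_comm: "pair \<alpha> x = pair x \<alpha>"
  unfolding pair_def by (simp add: mult.commute)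

lemma bvec_mult1: "bvec i j * (x::'a::semiring_1) = (if j = i then x else 0)" by (simp add: bvec_def)

lemma bvec_mult2: "(x::'a::semiring_1) * bvec i j = (if j = i then x else 0)" by (simp add: bvec_def)

lemma sum_if_const: "(\<Sum>j\<in>A. if P then f j else 0) = (if P then (\<Sum>j\<in>A. f j) else 0)" by simp

lemma if0_mult1: "(if P then a else 0) * b = (if P then a * b else (0::'a::mult_zero))" by simp

lemma if0_mult2: "b * (if P then a else 0) = (if P then b * a else (0::'a::mult_zero))" by simp

lemmas bvec_simps = bvec_mult1 bvec_mult2 if0_mult1 if0_mult2 sum_if_const

lemma pair_bvec: "pair \<alpha> (bvec i) = \<alpha> i"
  unfolding pair_def by (simp add: bvec_simps)

lemma pair_add: "pair \<alpha> (\<lambda>j. x j + y j) = pair \<alpha> x + pair \<alpha> y"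
  unfolding pair_def by (simp add: distrib_left sum.distrib)

lemma pair_diff: "pair \<alpha> (\<lambda>j. x j - y j) = pair \<alpha> x - pair \<alpha> y"
  unfolding pair_def by (simp add: right_diff_distrib sum_subtractf)

lemma pair_minus: "pair \<alpha> (\<lambda>j. - x j) = - pair \<alpha> x"
  unfolding pair_def by (simp add: sum_negf)

lemma pair_scale: "pair \<alpha> (\<lambda>j. a * x j) = a * pair \<alpha> x"
  unfolding pair_def by (simp add: sum_distrib_left mult_ac)

lemma pair_diff_left: "pair (\<lambda>j. x j - y j) \<alpha> = pair x \<alpha> - pair y \<alpha>"
  unfolding pair_def by (simp add: left_diff_distrib sum_subtractf)

lemma pair_lin_left: "pair (\<lambda>j. a * u j + v j) x = a * pair u x + pair v x"
  unfolding pair_def by (simp add: ring_distribs sum.distrib sum_distrib_left mult_ac)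

lemma pair_lin: "pair x (\<lambda>j. a * u j + v j) = a * pair x u + pair x v"
  unfolding pair_def by (simp add: distrib_left sum.distrib sum_distrib_left mult_ac)

lemma pair_sum: "pair z (\<lambda>i. \<Sum>s\<in>S. f s i) = (\<Sum>s\<in>S. pair z (f s))"
  unfolding pair_def by (simp add: sum_distrib_left) (rule sum.swap)

lemma eq_if_pair_eq: "(\<And>z. pair \<alpha> z = pair \<beta> z) \<Longrightarrow> \<alpha> = \<beta>"
proof
  fix j assume "\<And>z. pair \<alpha> z = pair \<beta> z"
  from this[of "bvec j"] show "\<alpha> j = \<beta> j" by (simp add: pair_bvec)
qed

lemma pmul_expand_right: "pmul c x y k = (\<Sum>j\<in>UNIV. y j * pmul c x (bvec j) k)"
proof -
  have "pmul c x (bvec j) k = (\<Sum>i\<in>UNIV. x i * c i j k)" for j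
    unfolding pmul_def by (simp add: bvec_simps)
  then show ?thesis unfolding pmul_def
    by (simp add: sum_distrib_left mult_ac) (rule sum.swap)
qed

lemma pmul_expand_left: "pmul c x y k = (\<Sum>i\<in>UNIV. x i * pmul c (bvec i) y k)"
proof -
  have "pmul c (bvec i) y k = (\<Sum>j\<in>UNIV. y j * c i j k)" for i
    unfolding pmul_def by (simp add: bvec_simps)
  then show ?thesis unfolding pmul_def
    by (simp add: sum_distrib_left mult_ac)
qed

lemma pair_pmul_expand_right: "pair \<alpha> (pmul c x y) = (\<Sum>j\<in>UNIV. y j * pair \<alpha> (pmul c x (bvec j)))"
  unfolding pair_def by (subst pmul_expand_right) (simp add: sum_distrib_left mult_ac, rule sum.swap)

lemma pair_pmul_expand_left: "pair \<alpha> (pmul c x y) = (\<Sum>i\<in>UNIV. x i * pair \<alpha> (pmul c (bvec i) y))"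
  unfolding pair_def by (subst pmul_expand_left) (simp add: sum_distrib_left mult_ac, rule sum.swap)

lemma pair_pmul_bilinear: "pair \<alpha> (pmul c x y) = (\<Sum>i\<in>UNIV. \<Sum>j\<in>UNIV. x i * y j * pair \<alpha> (pmul c (bvec i) (bvec j)))"
  unfolding pair_pmul_expand_left[of \<alpha> c x y] pair_pmul_expand_right[of \<alpha> c "bvec _" y]
  by (simp add: sum_distrib_left mult_ac)

lemma pmul_diff_left: "pmul c (\<lambda>j. u j - v j) y = (\<lambda>k. pmul c u y k - pmul c v y k)"
  unfolding pmul_def by (rule ext) (simp add: left_diff_distrib sum_subtractf)

lemma pmul_diff_right: "pmul c y (\<lambda>j. u j - v j) = (\<lambda>k. pmul c y u k - pmul c y v k)"
  unfolding pmul_def by (rule ext) (simp add: left_diff_distrib right_diff_distrib sum_subtractf)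

lemma pmul_lin_left: "pmul c (\<lambda>j. a * u j + v j) y = (\<lambda>k. a * pmul c u y k + pmul c v y k)"
  unfolding pmul_def by (rule ext) (simp add: ring_distribs sum.distrib sum_distrib_left mult_ac)

lemma pmul_lin_right: "pmul c y (\<lambda>j. a * u j + v j) = (\<lambda>k. a * pmul c y u k + pmul c y v k)"
  unfolding pmul_def by (rule ext) (simp add: distrib_right distrib_left sum.distrib sum_distrib_left mult_ac)

lemma pair_Lstar: "pair (Lstar c x \<alpha>) y = - pair \<alpha> (pmul c x y)"
  unfolding pair_pmul_expand_right[of \<alpha> c x y]
  by (simp add: Lstar_def pair_def sum_negf mult_ac)

lemma pair_Rstar: "pair (Rstar c x \<alpha>) y = - pair \<alpha> (pmul c y x)"
  unfolding pair_pmul_expand_left[of \<alpha> c y x]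
  by (simp add: Rstar_def pair_def sum_negf mult_ac)

lemma pair_adstar: "pair (adstar c x \<alpha>) y = - pair \<alpha> (pmul c x y) + pair \<alpha> (pmul c y x)"
  unfolding adstar_def pair_diff_left pair_Lstar pair_Rstar by simp

lemma pair_rsharp: "pair \<beta> (rsharp R \<alpha>) = rform R \<alpha> \<beta>"
proof -
  have "rsharp R \<alpha> q = (\<Sum>p\<in>UNIV. \<alpha> p * R p q)" for q
    unfolding rsharp_def rform_def by (simp add: bvec_simps)
  then show ?thesis unfolding pair_def rform_def
    by (simp add: sum_distrib_left mult_ac) (rule sum.swap)
qed

lemma rform_sym: "symmetric_tensor R \<Longrightarrow> rform R \<alpha> \<beta> = rform R \<beta> \<alpha>"
  unfolding rform_def symmetric_tensor_def
  by (subst sum.swap) (simp add: mult_ac)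

lemma rsharp_coord: "rsharp R \<alpha> q = (\<Sum>p\<in>UNIV. R p q * \<alpha> p)"
  unfolding rsharp_def rform_def by (simp add: bvec_simps mult_ac)

lemma rsharp_coord_sym: "symmetric_tensor R \<Longrightarrow> rsharp R \<alpha> p = (\<Sum>q\<in>UNIV. R p q * \<alpha> q)"
  unfolding rsharp_coord symmetric_tensor_def by simp

lemma rsharp_diff: "rsharp R (\<lambda>j. u j - v j) = (\<lambda>q. rsharp R u q - rsharp R v q)"
  unfolding rsharp_coord by (rule ext) (simp add: right_diff_distrib sum_subtractf)

lemma rsharp_lin: "rsharp R (\<lambda>j. a * u j + v j) = (\<lambda>q. a * rsharp R u q + rsharp R v q)"
  unfolding rsharp_coord by (rule ext) (simp add: distrib_left sum.distrib sum_distrib_left mult_ac)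

lemma pair_dotr: "pair (dotr c R \<alpha> \<beta>) x =
   - pair \<beta> (pmul c (rsharp R \<alpha>) x) + pair \<beta> (pmul c x (rsharp R \<alpha>)) + pair \<alpha> (pmul c x (rsharp R \<beta>))"
  unfolding dotr_def pair_diff_left pair_adstar pair_Rstar by simp

lemma pair_brr: "pair (brr c R \<alpha> \<beta>) x = - pair \<beta> (pmul c (rsharp R \<alpha>) x) + pair \<alpha> (pmul c (rsharp R \<beta>) x)"
  unfolding brr_def pair_diff_left pair_Lstar by simp

lemma brr_dotr: "brr c R \<alpha> \<beta> = (\<lambda>j. dotr c R \<alpha> \<beta> j - dotr c R \<beta> \<alpha> j)"
  unfolding brr_def dotr_def adstar_def by (rule ext) simp

lemma dotr_lin_left: "dotr c R (\<lambda>j. a * u j + v j) \<beta> = (\<lambda>k. a * dotr c R u \<beta> k + dotr c R v \<beta> k)"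
proof (rule eq_if_pair_eq)
  fix x show "pair (dotr c R (\<lambda>j. a * u j + v j) \<beta>) x = pair (\<lambda>k. a * dotr c R u \<beta> k + dotr c R v \<beta> k) x"
    unfolding pair_lin_left pair_dotr rsharp_lin pmul_lin_left pmul_lin_right pair_lin
    by (simp add: algebra_simps)
qed

lemma dotr_lin_right: "dotr c R \<alpha> (\<lambda>j. a * u j + v j) = (\<lambda>k. a * dotr c R \<alpha> u k + dotr c R \<alpha> v k)"
proof (rule eq_if_pair_eq)
  fix x show "pair (dotr c R \<alpha> (\<lambda>j. a * u j + v j)) x = pair (\<lambda>k. a * dotr c R \<alpha> u k + dotr c R \<alpha> v k) x"
    unfolding pair_lin_left pair_dotr rsharp_lin pmul_lin_left pmul_lin_right pair_lin
    by (simp add: algebra_simps)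
qed

lemma brr_lin_left: "brr c R (\<lambda>j. a * u j + v j) \<beta> = (\<lambda>k. a * brr c R u \<beta> k + brr c R v \<beta> k)"
proof (rule eq_if_pair_eq)
  fix x show "pair (brr c R (\<lambda>j. a * u j + v j) \<beta>) x = pair (\<lambda>k. a * brr c R u \<beta> k + brr c R v \<beta> k) x"
    unfolding pair_lin_left pair_brr rsharp_lin pmul_lin_left pmul_lin_right pair_lin
    by (simp add: algebra_simps)
qed

lemma dotr_diff_right: "dotr c R \<alpha> (\<lambda>j. u j - v j) = (\<lambda>k. dotr c R \<alpha> u k - dotr c R \<alpha> v k)"
proof -
  have "(\<lambda>j. u j - v j) = (\<lambda>j. (-1) * v j + u j)" by (rule ext) simp
  then have "dotr c R \<alpha> (\<lambda>j. u j - v j) = dotr c R \<alpha> (\<lambda>j. (-1) * v j + u j)" by simp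
  also have "\<dots> = (\<lambda>k. (-1) * dotr c R \<alpha> v k + dotr c R \<alpha> u k)" by (rule dotr_lin_right)
  finally show ?thesis by simp
qed

section \<open>The s-matrix condition\<close>

lemma sum_mult_sum_mult: "(\<Sum>q\<in>U. f q) * (\<Sum>t\<in>V. g t) * h = (\<Sum>q\<in>U. \<Sum>t\<in>V. f q * g t * (h::'a::comm_semiring_1))"
  by (simp add: sum_distrib_right sum_distrib_left mult.assoc) (rule sum.swap)

lemma sum4_factor_ps: "(\<Sum>p\<in>U. \<Sum>q\<in>U. \<Sum>s\<in>U. \<Sum>t\<in>U. f p q * g s t * h p s) =
   (\<Sum>p\<in>U. \<Sum>s\<in>U. (\<Sum>q\<in>U. f p q) * (\<Sum>t\<in>U. g s t) * (h p s :: 'a::comm_semiring_1))"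
proof -
  have "(\<Sum>p\<in>U. \<Sum>s\<in>U. (\<Sum>q\<in>U. f p q) * (\<Sum>t\<in>U. g s t) * h p s)
      = (\<Sum>p\<in>U. \<Sum>s\<in>U. \<Sum>q\<in>U. \<Sum>t\<in>U. f p q * g s t * h p s)"
    by (simp only: sum_mult_sum_mult)
  also have "\<dots> = (\<Sum>p\<in>U. \<Sum>q\<in>U. \<Sum>s\<in>U. \<Sum>t\<in>U. f p q * g s t * h p s)"
    by (rule sum.cong[OF refl], rule sum.swap)
  finally show ?thesis ..
qed

lemma sum4_factor_qs: "(\<Sum>p\<in>U. \<Sum>q\<in>U. \<Sum>s\<in>U. \<Sum>t\<in>U. f p q * g s t * h q s) =
   (\<Sum>q\<in>U. \<Sum>s\<in>U. (\<Sum>p\<in>U. f p q) * (\<Sum>t\<in>U. g s t) * (h q s :: 'a::comm_semiring_1))"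
proof -
  have "(\<Sum>q\<in>U. \<Sum>s\<in>U. (\<Sum>p\<in>U. f p q) * (\<Sum>t\<in>U. g s t) * h q s)
      = (\<Sum>q\<in>U. \<Sum>s\<in>U. \<Sum>p\<in>U. \<Sum>t\<in>U. f p q * g s t * h q s)"
    by (simp only: sum_mult_sum_mult)
  also have "\<dots> = (\<Sum>q\<in>U. \<Sum>p\<in>U. \<Sum>s\<in>U. \<Sum>t\<in>U. f p q * g s t * h q s)"
    by (rule sum.cong[OF refl], rule sum.swap)
  also have "\<dots> = (\<Sum>p\<in>U. \<Sum>q\<in>U. \<Sum>s\<in>U. \<Sum>t\<in>U. f p q * g s t * h q s)"
    by (rule sum.swap)
  finally show ?thesis ..
qed

lemma sum4_factor_qt: "(\<Sum>p\<in>U. \<Sum>q\<in>U. \<Sum>s\<in>U. \<Sum>t\<in>U. f p q * g s t * h q t) =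
   (\<Sum>q\<in>U. \<Sum>t\<in>U. (\<Sum>p\<in>U. f p q) * (\<Sum>s\<in>U. g s t) * (h q t :: 'a::comm_semiring_1))"
proof -
  have "(\<Sum>q\<in>U. \<Sum>t\<in>U. (\<Sum>p\<in>U. f p q) * (\<Sum>s\<in>U. g s t) * h q t)
      = (\<Sum>q\<in>U. \<Sum>t\<in>U. \<Sum>p\<in>U. \<Sum>s\<in>U. f p q * g s t * h q t)"
    by (simp only: sum_mult_sum_mult)
  also have "\<dots> = (\<Sum>q\<in>U. \<Sum>p\<in>U. \<Sum>t\<in>U. \<Sum>s\<in>U. f p q * g s t * h q t)"
    by (rule sum.cong[OF refl], rule sum.swap)
  also have "\<dots> = (\<Sum>q\<in>U. \<Sum>p\<in>U. \<Sum>s\<in>U. \<Sum>t\<in>U. f p q * g s t * h q t)"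
    by (rule sum.cong[OF refl], rule sum.cong[OF refl], rule sum.swap)
  also have "\<dots> = (\<Sum>p\<in>U. \<Sum>q\<in>U. \<Sum>s\<in>U. \<Sum>t\<in>U. f p q * g s t * h q t)"
    by (rule sum.swap)
  finally show ?thesis ..
qed

lemma rr_sum1_eq:
  assumes sym: "symmetric_tensor R"
  shows "(\<Sum>p\<in>UNIV. \<Sum>q\<in>UNIV. \<Sum>s\<in>UNIV. \<Sum>t\<in>UNIV.
        R p q * R s t * pair \<alpha> (pmul c (bvec p) (bvec s)) * pair \<beta> (bvec q) * pair \<gamma> (bvec t))
    = pair \<alpha> (pmul c (rsharp R \<beta>) (rsharp R \<gamma>))"
proof -
  have "(\<Sum>p\<in>UNIV. \<Sum>q\<in>UNIV. \<Sum>s\<in>UNIV. \<Sum>t\<in>UNIV.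
        R p q * R s t * pair \<alpha> (pmul c (bvec p) (bvec s)) * pair \<beta> (bvec q) * pair \<gamma> (bvec t))
    = (\<Sum>p\<in>UNIV. \<Sum>q\<in>UNIV. \<Sum>s\<in>UNIV. \<Sum>t\<in>UNIV.
        (R p q * \<beta> q) * (R s t * \<gamma> t) * pair \<alpha> (pmul c (bvec p) (bvec s)))"
    by (intro sum.cong refl) (simp add: pair_bvec mult_ac)
  also have "\<dots> = pair \<alpha> (pmul c (rsharp R \<beta>) (rsharp R \<gamma>))"
    unfolding sum4_factor_ps by (simp only: pair_pmul_bilinear[of \<alpha> c "rsharp R \<beta>" "rsharp R \<gamma>"] rsharp_coord_sym[OF sym])
  finally show ?thesis .
qed

lemma rr_sum2_eq:
  assumes sym: "symmetric_tensor R"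
  shows "(\<Sum>p\<in>UNIV. \<Sum>q\<in>UNIV. \<Sum>s\<in>UNIV. \<Sum>t\<in>UNIV.
        R p q * R s t * pair \<alpha> (bvec p) * pair \<beta> (pmul c (bvec q) (bvec s)) * pair \<gamma> (bvec t))
    = pair \<beta> (pmul c (rsharp R \<alpha>) (rsharp R \<gamma>))"
proof -
  have "(\<Sum>p\<in>UNIV. \<Sum>q\<in>UNIV. \<Sum>s\<in>UNIV. \<Sum>t\<in>UNIV.
        R p q * R s t * pair \<alpha> (bvec p) * pair \<beta> (pmul c (bvec q) (bvec s)) * pair \<gamma> (bvec t))
    = (\<Sum>p\<in>UNIV. \<Sum>q\<in>UNIV. \<Sum>s\<in>UNIV. \<Sum>t\<in>UNIV.
        (R p q * \<alpha> p) * (R s t * \<gamma> t) * pair \<beta> (pmul c (bvec q) (bvec s)))"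
    by (intro sum.cong refl) (simp add: pair_bvec mult_ac)
  also have "\<dots> = pair \<beta> (pmul c (rsharp R \<alpha>) (rsharp R \<gamma>))"
    unfolding sum4_factor_qs by (simp only: pair_pmul_bilinear[of \<beta> c "rsharp R \<alpha>" "rsharp R \<gamma>"] rsharp_coord_sym[OF sym, of \<gamma>] rsharp_coord[of R \<alpha>])
  finally show ?thesis .
qed

lemma rr_sum3_eq:
  "(\<Sum>p\<in>UNIV. \<Sum>q\<in>UNIV. \<Sum>s\<in>UNIV. \<Sum>t\<in>UNIV.
        R p q * R s t * pair \<alpha> (bvec p) * pair \<beta> (bvec s) * pair \<gamma> (lbr c (bvec q) (bvec t)))
    = pair \<gamma> (lbr c (rsharp R \<alpha>) (rsharp R \<beta>))"
proof -
  have "(\<Sum>p\<in>UNIV. \<Sum>q\<in>UNIV. \<Sum>s\<in>UNIV. \<Sum>t\<in>UNIV.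
        R p q * R s t * pair \<alpha> (bvec p) * pair \<beta> (bvec s) * pair \<gamma> (lbr c (bvec q) (bvec t)))
    = (\<Sum>p\<in>UNIV. \<Sum>q\<in>UNIV. \<Sum>s\<in>UNIV. \<Sum>t\<in>UNIV.
        (R p q * \<alpha> p) * (R s t * \<beta> s) * pair \<gamma> (lbr c (bvec q) (bvec t)))"
    by (intro sum.cong refl) (simp add: pair_bvec mult_ac)
  also have "\<dots> = (\<Sum>q\<in>UNIV. \<Sum>t\<in>UNIV. rsharp R \<alpha> q * rsharp R \<beta> t * pair \<gamma> (lbr c (bvec q) (bvec t)))"
    unfolding sum4_factor_qt rsharp_coord ..
  also have "\<dots> = pair \<gamma> (pmul c (rsharp R \<alpha>) (rsharp R \<beta>)) - pair \<gamma> (pmul c (rsharp R \<beta>) (rsharp R \<alpha>))"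
  proof -
    have "(\<Sum>q\<in>UNIV. \<Sum>t\<in>UNIV. rsharp R \<alpha> q * rsharp R \<beta> t * pair \<gamma> (pmul c (bvec t) (bvec q)))
        = pair \<gamma> (pmul c (rsharp R \<beta>) (rsharp R \<alpha>))"
      unfolding pair_pmul_bilinear[of \<gamma> c "rsharp R \<beta>"] by (subst sum.swap) (simp add: mult_ac)
    then show ?thesis unfolding lbr_def pair_diff pair_pmul_bilinear[of \<gamma> c "rsharp R \<alpha>"]
      by (simp add: right_diff_distrib sum_subtractf)
  qed
  finally show ?thesis unfolding lbr_def pair_diff .
qed

lemma rr_eq:
  assumes sym: "symmetric_tensor R"
  shows "rr c R \<alpha> \<beta> \<gamma> = - pair \<alpha> (pmul c (rsharp R \<beta>) (rsharp R \<gamma>))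
     + pair \<beta> (pmul c (rsharp R \<alpha>) (rsharp R \<gamma>)) + pair \<gamma> (lbr c (rsharp R \<alpha>) (rsharp R \<beta>))"
  unfolding rr_def rr_sum1_eq[OF sym] rr_sum2_eq[OF sym] rr_sum3_eq ..

lemma rsharp_dotr:
  assumes sym: "symmetric_tensor R" and sm: "s_matrix c R"
  shows "rsharp R (dotr c R \<alpha> \<beta>) = pmul c (rsharp R \<alpha>) (rsharp R \<beta>)"
proof (rule eq_if_pair_eq)
  fix \<gamma>
  have rr0: "rr c R \<alpha> \<gamma> \<beta> = 0" using sm unfolding s_matrix_def by blast
  have "pair (rsharp R (dotr c R \<alpha> \<beta>)) \<gamma> = rform R (dotr c R \<alpha> \<beta>) \<gamma>"
    by (simp only: pair_comm[of _ \<gamma>] pair_rsharp)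
  also have "\<dots> = rform R \<gamma> (dotr c R \<alpha> \<beta>)" by (rule rform_sym[OF sym])
  also have "\<dots> = pair (dotr c R \<alpha> \<beta>) (rsharp R \<gamma>)" by (simp only: pair_rsharp)
  also have "\<dots> = - pair \<beta> (pmul c (rsharp R \<alpha>) (rsharp R \<gamma>)) + pair \<beta> (pmul c (rsharp R \<gamma>) (rsharp R \<alpha>))
        + pair \<alpha> (pmul c (rsharp R \<gamma>) (rsharp R \<beta>))" by (rule pair_dotr)
  also have "\<dots> = pair \<gamma> (pmul c (rsharp R \<alpha>) (rsharp R \<beta>))"
    using rr0 unfolding rr_eq[OF sym] lbr_def pair_diff by (simp add: algebra_simps)
  also have "\<dots> = pair (pmul c (rsharp R \<alpha>) (rsharp R \<beta>)) \<gamma>" by (rule pair_comm)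
  finally show "pair (rsharp R (dotr c R \<alpha> \<beta>)) \<gamma> = pair (pmul c (rsharp R \<alpha>) (rsharp R \<beta>)) \<gamma>" .
qed

lemma pre_lie_rewrite:
  assumes "pre_lie c"
  shows "pmul c (pmul c x y) z k = pmul c x (pmul c y z) k + pmul c (pmul c y x) z k - pmul c y (pmul c x z) k"
proof -
  have eq: "pmul c (pmul c x y) z k - pmul c x (pmul c y z) k = pmul c (pmul c y x) z k - pmul c y (pmul c x z) k"
    using assms unfolding pre_lie_def by blast
  have "pmul c (pmul c x y) z k = (pmul c (pmul c x y) z k - pmul c x (pmul c y z) k) + pmul c x (pmul c y z) k" by simp
  also have "\<dots> = (pmul c (pmul c y x) z k - pmul c y (pmul c x z) k) + pmul c x (pmul c y z) k" unfolding eq ..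
  finally show ?thesis by simp
qed

lemma dotr_pre_lie:
  assumes pl: "pre_lie c" and sym: "symmetric_tensor R" and sm: "s_matrix c R"
  shows "(\<lambda>j. dotr c R \<alpha> (dotr c R \<beta> \<gamma>) j - dotr c R \<beta> (dotr c R \<alpha> \<gamma>) j) = dotr c R (brr c R \<alpha> \<beta>) \<gamma>"
proof (rule eq_if_pair_eq)
  fix x
  define A where "A = rsharp R \<alpha>"
  define B where "B = rsharp R \<beta>"
  define C where "C = rsharp R \<gamma>"
  let ?P = "pmul c"
  have Tbrr: "rsharp R (brr c R \<alpha> \<beta>) = (\<lambda>k. ?P A B k - ?P B A k)"
    unfolding brr_dotr rsharp_diff rsharp_dotr[OF sym sm] A_def B_def ..
  define Zg where "Zg = (\<lambda>k. ?P B (?P A x) k - ?P (?P A x) B k - ?P B (?P x A) k + ?P (?P x A) B k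
     - ?P A (?P B x) k + ?P (?P B x) A k + ?P A (?P x B) k - ?P (?P x B) A k
     + ?P (?P A B) x k - ?P (?P B A) x k - ?P x (?P A B) k + ?P x (?P B A) k)"
  define Zb where "Zb = (\<lambda>k. - ?P (?P A x) C k + ?P (?P x A) C k - ?P x (?P A C) k + ?P A (?P x C) k)"
  define Za where "Za = (\<lambda>k. ?P x (?P B C) k + ?P (?P B x) C k - ?P (?P x B) C k - ?P B (?P x C) k)"
  have zg: "pair \<gamma> Zg = 0"
  proof -
    have "Zg = (\<lambda>k. 0)" unfolding Zg_def
      by (rule ext) (simp add: pre_lie_rewrite[OF pl, of A B x] pre_lie_rewrite[OF pl, of x A B] pre_lie_rewrite[OF pl, of B x A] algebra_simps)
    then show ?thesis by (simp add: pair_def)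
  qed
  have zb: "pair \<beta> Zb = 0"
  proof -
    have "Zb = (\<lambda>k. 0)" unfolding Zb_def
      by (rule ext) (simp add: pre_lie_rewrite[OF pl, of A x C] algebra_simps)
    then show ?thesis by (simp add: pair_def)
  qed
  have za: "pair \<alpha> Za = 0"
  proof -
    have "Za = (\<lambda>k. 0)" unfolding Za_def
      by (rule ext) (simp add: pre_lie_rewrite[OF pl, of x B C] algebra_simps)
    then show ?thesis by (simp add: pair_def)
  qed
  have "pair (\<lambda>j. dotr c R \<alpha> (dotr c R \<beta> \<gamma>) j - dotr c R \<beta> (dotr c R \<alpha> \<gamma>) j) x
      - pair (dotr c R (brr c R \<alpha> \<beta>) \<gamma>) x = pair \<gamma> Zg + pair \<beta> Zb + pair \<alpha> Za"
    unfolding Zg_def Zb_def Za_def pair_diff_left pair_dotr rsharp_dotr[OF sym sm] Tbrr pair_brr pmul_diff_left pmul_diff_right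
      pair_diff pair_add pair_minus A_def[symmetric] B_def[symmetric] C_def[symmetric]
    by (simp add: algebra_simps)
  then show "pair (\<lambda>j. dotr c R \<alpha> (dotr c R \<beta> \<gamma>) j - dotr c R \<beta> (dotr c R \<alpha> \<gamma>) j) x
      = pair (dotr c R (brr c R \<alpha> \<beta>) \<gamma>) x" using zg zb za by simp
qed

lemma brr_jacobi:
  assumes pl: "pre_lie c" and sym: "symmetric_tensor R" and sm: "s_matrix c R"
  shows "(\<lambda>k. brr c R (brr c R x y) w k - brr c R (brr c R x w) y k + brr c R (brr c R y w) x k) = (\<lambda>k. 0)"
proof -
  let ?m = "dotr c R" and ?b = "brr c R"
  have P: "?m (?b u v) t = (\<lambda>j. ?m u (?m v t) j - ?m v (?m u t) j)" for u v t
    using dotr_pre_lie[OF pl sym sm, of u v t] by simp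
  have E: "?b (?b u v) t = (\<lambda>j. (?m u (?m v t) j - ?m v (?m u t) j) - (?m t (?m u v) j - ?m t (?m v u) j))" for u v t
    unfolding brr_dotr[of c R "?b u v" t] P unfolding brr_dotr dotr_diff_right by simp
  show ?thesis unfolding E by (rule ext) (simp add: algebra_simps)
qed

section \<open>Unshuffles\<close>

text \<open>
  Parametrisations of the unshuffles occurring in \<open>sbr\<close>: \<open>last_to i m\<close> ranges over
  S_(m,1,0), \<open>first_to a\<close> over S_(1,m), and \<open>first_to a \<circ> second_to b\<close> over S_(1,1,q).
\<close>

definition last_to :: "nat \<Rightarrow> nat \<Rightarrow> nat \<Rightarrow> nat" where
  "last_to i m x = (if x < i then x else if x < m then x + 1 else if x = m then i else x)"

definition first_to :: "nat \<Rightarrow> nat \<Rightarrow> nat" where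
  "first_to a x = (if x = 0 then a else if x \<le> a then x - 1 else x)"

definition second_to :: "nat \<Rightarrow> nat \<Rightarrow> nat" where
  "second_to b x = (if x = 0 then 0 else if x = 1 then b + 1 else if x \<le> b + 1 then x - 1 else x)"

lemma last_to_same: "last_to m m = id"
  by (rule ext) (simp add: last_to_def)

lemma last_to_step: "i < m \<Longrightarrow> last_to i m = Transposition.transpose i (Suc i) \<circ> last_to (Suc i) m"
  by (rule ext) (auto simp: last_to_def transpose_def)

lemma first_to_0: "first_to 0 = id"
  by (rule ext) (simp add: first_to_def)

lemma first_to_step: "first_to (Suc a) = Transposition.transpose a (Suc a) \<circ> first_to a"
  by (rule ext) (auto simp: first_to_def transpose_def)

lemma second_to_0: "second_to 0 = id"
  by (rule ext) (simp add: second_to_def)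

lemma second_to_step: "second_to (Suc b) = Transposition.transpose (Suc b) (Suc (Suc b)) \<circ> second_to b"
  by (rule ext) (auto simp: second_to_def transpose_def)

lemma last_to_perm: "i \<le> m \<Longrightarrow> last_to i m permutes {..m} \<and> sign (last_to i m) = (-1)^(m-i)"
proof (induction "m - i" arbitrary: i)
  case 0 then have "i = m" by simp
  then show ?case by (simp only: last_to_same permutes_id sign_id diff_self_eq_0 power_0 simp_thms)
next
  case (Suc d)
  then have im: "i < m" and d: "d = m - Suc i" by auto
  from Suc.hyps(1)[OF d] im have IH: "last_to (Suc i) m permutes {..m}" "sign (last_to (Suc i) m) = (-1)^(m - Suc i)" by auto
  have t: "Transposition.transpose i (Suc i) permutes {..m}" using im by (intro permutes_swap_id) auto
  have "last_to i m permutes {..m}" unfolding last_to_step[OF im] by (rule permutes_compose[OF IH(1) t])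
  moreover have "sign (last_to i m) = (-1)^(m-i)"
  proof -
    have "sign (last_to i m) = sign (Transposition.transpose i (Suc i)) * sign (last_to (Suc i) m)"
      unfolding last_to_step[OF im]
      by (rule sign_compose) (auto intro: permutes_imp_permutation[OF _ t] permutes_imp_permutation[OF _ IH(1)])
    also have "\<dots> = - ((-1)^(m - Suc i))" using IH(2) by (simp add: sign_swap_id)
    also have "\<dots> = (-1)^(m-i)"
    proof -
      have "m - i = Suc (m - Suc i)" using im by simp
      then show ?thesis by simp
    qed
    finally show ?thesis .
  qed
  ultimately show ?case by simp
qed

lemma first_to_perm: "first_to a permutes {..a} \<and> sign (first_to a) = (-1)^a"
proof (induction a)
  case 0 then show ?case unfolding first_to_0 by (simp only: permutes_id sign_id power_0 simp_thms)
next
  case (Suc a)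
  have IH1: "first_to a permutes {..Suc a}" using Suc.IH by (auto intro: permutes_subset)
  have t: "Transposition.transpose a (Suc a) permutes {..Suc a}" by (intro permutes_swap_id) auto
  have "first_to (Suc a) permutes {..Suc a}" unfolding first_to_step by (rule permutes_compose[OF IH1 t])
  moreover have "sign (first_to (Suc a)) = (-1)^(Suc a)"
  proof -
    have "sign (first_to (Suc a)) = sign (Transposition.transpose a (Suc a)) * sign (first_to a)"
      unfolding first_to_step
      by (rule sign_compose) (auto intro: permutes_imp_permutation[OF _ t] permutes_imp_permutation[OF _ IH1])
    then show ?thesis using Suc.IH by (simp add: sign_swap_id)
  qed
  ultimately show ?case by simp
qed

lemma second_to_perm: "second_to b permutes {..Suc b} \<and> sign (second_to b) = (-1)^b"
proof (induction b)
  case 0 then show ?case unfolding second_to_0 by (simp only: permutes_id sign_id power_0 simp_thms)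
next
  case (Suc b)
  have IH1: "second_to b permutes {..Suc (Suc b)}" using Suc.IH by (auto intro: permutes_subset)
  have t: "Transposition.transpose (Suc b) (Suc (Suc b)) permutes {..Suc (Suc b)}" by (intro permutes_swap_id) auto
  have "second_to (Suc b) permutes {..Suc (Suc b)}" unfolding second_to_step by (rule permutes_compose[OF IH1 t])
  moreover have "sign (second_to (Suc b)) = (-1)^(Suc b)"
  proof -
    have "sign (second_to (Suc b)) = sign (Transposition.transpose (Suc b) (Suc (Suc b))) * sign (second_to b)"
      unfolding second_to_step
      by (rule sign_compose) (auto intro: permutes_imp_permutation[OF _ t] permutes_imp_permutation[OF _ IH1])
    then show ?thesis using Suc.IH by (simp add: sign_swap_id)
  qed
  ultimately show ?case by simp
qed

lemma all_less3: "(\<forall>b<Suc (Suc (Suc 0)). P b) \<longleftrightarrow> P 0 \<and> P 1 \<and> P 2"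
  by (auto simp: less_Suc_eq numeral_2_eq_2)

lemma all_less2: "(\<forall>b<Suc (Suc 0). P b) \<longleftrightarrow> P 0 \<and> P 1"
  by (auto simp: less_Suc_eq)

lemma unsh3: "\<sigma> \<in> unsh [p, q, r] \<longleftrightarrow> \<sigma> permutes {..<p+q+r} \<and>
   (\<forall>x y. x < y \<and> y < p \<longrightarrow> \<sigma> x < \<sigma> y) \<and>
   (\<forall>x y. p \<le> x \<and> x < y \<and> y < p + q \<longrightarrow> \<sigma> x < \<sigma> y) \<and>
   (\<forall>x y. p + q \<le> x \<and> x < y \<and> y < p + q + r \<longrightarrow> \<sigma> x < \<sigma> y)"
proof -
  have "length [p,q,r] = Suc (Suc (Suc 0))" by simp
  then show ?thesis unfolding unsh_def mem_Collect_eq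
    by (simp only: all_less3) (simp add: add.assoc)
qed

lemma unsh2: "\<sigma> \<in> unsh [p, q] \<longleftrightarrow> \<sigma> permutes {..<p+q} \<and>
   (\<forall>x y. x < y \<and> y < p \<longrightarrow> \<sigma> x < \<sigma> y) \<and>
   (\<forall>x y. p \<le> x \<and> x < y \<and> y < p + q \<longrightarrow> \<sigma> x < \<sigma> y)"
proof -
  have "length [p,q] = Suc (Suc 0)" by simp
  then show ?thesis unfolding unsh_def mem_Collect_eq
    by (simp only: all_less2) simp
qed

lemma increasing_eq_if_image_eq:
  fixes f g :: "nat \<Rightarrow> nat" and x :: nat
  assumes f: "\<And>x y. lo \<le> x \<Longrightarrow> x < y \<Longrightarrow> y < hi \<Longrightarrow> f x < (f y::nat)"
    and g: "\<And>x y. lo \<le> x \<Longrightarrow> x < y \<Longrightarrow> y < hi \<Longrightarrow> g x < (g y::nat)"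
    and im: "f ` {lo..<hi} = g ` {lo..<hi}"
  shows "x \<in> {lo..<hi} \<Longrightarrow> f x = g x"
proof (induction x rule: less_induct)
  case (less x)
  then have x: "lo \<le> x" "x < hi" by auto
  have "f x \<in> g ` {lo..<hi}" using im less.prems by blast
  then obtain y where y: "y \<in> {lo..<hi}" "f x = g y" by auto
  have "x \<le> y"
  proof (rule ccontr)
    assume "\<not> x \<le> y" then have "y < x" by simp
    then have "f y = g y" using less.IH y by auto
    moreover have "f y < f x" using f[of y x] \<open>y < x\<close> y x by auto
    ultimately show False using y by simp
  qed
  then have g1: "g x \<le> f x" using y g[of x y] x by (cases "x = y") auto
  have "g x \<in> f ` {lo..<hi}" using im less.prems by blast
  then obtain y' where y': "y' \<in> {lo..<hi}" "g x = f y'" by auto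
  have "x \<le> y'"
  proof (rule ccontr)
    assume "\<not> x \<le> y'" then have "y' < x" by simp
    then have "f y' = g y'" using less.IH y' by auto
    moreover have "g y' < g x" using g[of y' x] \<open>y' < x\<close> y' x by auto
    ultimately show False using y' by simp
  qed
  then have g2: "f x \<le> g x" using y' f[of x y'] x by (cases "x = y'") auto
  show ?case using g1 g2 by simp
qed

lemma permutes_eq_if_increasing_block:
  fixes \<sigma> \<tau> :: "nat \<Rightarrow> nat"
  assumes ps: "\<sigma> permutes {..<N}" and pt: "\<tau> permutes {..<N}"
    and X: "\<And>x. x \<in> X \<Longrightarrow> \<sigma> x = \<tau> x"
    and XI: "X \<union> {lo..<hi} = {..<N}" "X \<inter> {lo..<hi} = {}"
    and fs: "\<And>x y. lo \<le> x \<Longrightarrow> x < y \<Longrightarrow> y < hi \<Longrightarrow> \<sigma> x < \<sigma> y"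
    and ft: "\<And>x y. lo \<le> x \<Longrightarrow> x < y \<Longrightarrow> y < hi \<Longrightarrow> \<tau> x < \<tau> y"
  shows "\<sigma> = \<tau>"
proof
  fix x
  have "\<sigma> ` {lo..<hi} = {..<N} - \<sigma> ` X"
  proof -
    have "\<sigma> ` {..<N} = {..<N}" by (rule permutes_image[OF ps])
    then have "\<sigma> ` X \<union> \<sigma> ` {lo..<hi} = {..<N}" using XI(1) by (metis image_Un)
    moreover have "\<sigma> ` X \<inter> \<sigma> ` {lo..<hi} = {}" using XI(2) permutes_inj[OF ps]
      by (auto simp: inj_def)
    ultimately show ?thesis by blast
  qed
  moreover have "\<tau> ` {lo..<hi} = {..<N} - \<tau> ` X"
  proof -
    have "\<tau> ` {..<N} = {..<N}" by (rule permutes_image[OF pt])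
    then have "\<tau> ` X \<union> \<tau> ` {lo..<hi} = {..<N}" using XI(1) by (metis image_Un)
    moreover have "\<tau> ` X \<inter> \<tau> ` {lo..<hi} = {}" using XI(2) permutes_inj[OF pt]
      by (auto simp: inj_def)
    ultimately show ?thesis by blast
  qed
  moreover have "\<sigma> ` X = \<tau> ` X" using X by auto
  ultimately have im: "\<sigma> ` {lo..<hi} = \<tau> ` {lo..<hi}" by simp
  show "\<sigma> x = \<tau> x"
  proof (cases "x \<in> {..<N}")
    case False then show ?thesis using permutes_not_in[OF ps] permutes_not_in[OF pt] by simp
  next
    case True
    then have "x \<in> X \<or> x \<in> {lo..<hi}" using XI(1) by blast
    then show ?thesis
    proof
      assume "x \<in> X" then show ?thesis by (rule X)
    next
      assume "x \<in> {lo..<hi}" then show ?thesis using increasing_eq_if_image_eq[OF fs ft im] by blast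
    qed
  qed
qed

lemma last_to_in_unsh: "i \<le> m \<Longrightarrow> last_to i m \<in> unsh [m,1,0]"
  unfolding unsh3 using last_to_perm[of i m] by (auto simp: lessThan_Suc_atMost last_to_def)

lemma unsh_m_1_0: "unsh [m,1,0] = (\<lambda>i. last_to i m) ` {..m}"
proof
  show "(\<lambda>i. last_to i m) ` {..m} \<subseteq> unsh [m,1,0]" using last_to_in_unsh by auto
next
  show "unsh [m,1,0] \<subseteq> (\<lambda>i. last_to i m) ` {..m}"
  proof
    fix \<sigma> assume s: "\<sigma> \<in> unsh [m,1,0]"
    then have ps: "\<sigma> permutes {..<Suc m}" and inc: "\<And>x y. x < y \<Longrightarrow> y < m \<Longrightarrow> \<sigma> x < \<sigma> y"
      unfolding unsh3 by auto
    define i where "i = \<sigma> m"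
    have "\<sigma> m \<in> {..<Suc m}" by (rule permutes_in_image[OF ps, THEN iffD2]) simp
    then have im: "i \<le> m" unfolding i_def by simp
    have pt: "last_to i m permutes {..<Suc m}" using last_to_perm[OF im] by (simp add: lessThan_Suc_atMost)
    have "\<sigma> = last_to i m"
      by (rule permutes_eq_if_increasing_block[OF ps pt, of "{m}" 0 m]) (use im in \<open>auto simp: i_def last_to_def inc\<close>)
    then show "\<sigma> \<in> (\<lambda>i. last_to i m) ` {..m}" using im by auto
  qed
qed

lemma inj_on_last_to: "inj_on (\<lambda>i. last_to i m) {..m}"
proof (rule inj_onI)
  fix i j assume "i \<in> {..m}" "j \<in> {..m}" "last_to i m = last_to j m"
  then have "last_to i m m = last_to j m m" by simp
  then show "i = j" using \<open>i \<in> {..m}\<close> \<open>j \<in> {..m}\<close> by (auto simp: last_to_def split: if_splits)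
qed

lemma sum_unsh_m_1_0: "(\<Sum>\<sigma>\<in>unsh [m,1,0]. f \<sigma>) = (\<Sum>i\<le>m. f (last_to i m))"
  unfolding unsh_m_1_0 by (subst sum.reindex[OF inj_on_last_to]) simp

lemma first_to_in_unsh: "a \<le> m \<Longrightarrow> first_to a \<in> unsh [1,m]"
  unfolding unsh2 using first_to_perm[of a]
  by (auto simp: first_to_def intro: permutes_subset)

lemma unsh_1_m: "unsh [1,m] = first_to ` {..m}"
proof
  show "first_to ` {..m} \<subseteq> unsh [1,m]" using first_to_in_unsh by auto
next
  show "unsh [1,m] \<subseteq> first_to ` {..m}"
  proof
    fix \<sigma> assume s: "\<sigma> \<in> unsh [1,m]"
    then have ps: "\<sigma> permutes {..<Suc m}" and inc: "\<And>x y. 1 \<le> x \<Longrightarrow> x < y \<Longrightarrow> y < Suc m \<Longrightarrow> \<sigma> x < \<sigma> y"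
      unfolding unsh2 by auto
    define a where "a = \<sigma> 0"
    have "\<sigma> 0 \<in> {..<Suc m}" by (rule permutes_in_image[OF ps, THEN iffD2]) simp
    then have am: "a \<le> m" unfolding a_def by simp
    have pt: "first_to a permutes {..<Suc m}" using first_to_perm[of a] am
      by (auto simp: lessThan_Suc_atMost intro: permutes_subset)
    have "\<sigma> = first_to a"
      by (rule permutes_eq_if_increasing_block[OF ps pt, of "{0}" 1 "Suc m"]) (auto simp: a_def first_to_def inc)
    then show "\<sigma> \<in> first_to ` {..m}" using am by auto
  qed
qed

lemma inj_on_first_to: "inj_on first_to {..m}"
proof (rule inj_onI)
  fix i j assume "first_to i = first_to j"
  then have "first_to i 0 = first_to j 0" by simp
  then show "i = j" by (simp add: first_to_def)
qed

lemma sum_unsh_1_m: "(\<Sum>\<sigma>\<in>unsh [1,m]. f \<sigma>) = (\<Sum>a\<le>m. f (first_to a))"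
  unfolding unsh_1_m by (subst sum.reindex[OF inj_on_first_to]) simp

lemma second_to_mono: "2 \<le> x \<Longrightarrow> x < y \<Longrightarrow> second_to b x < second_to b y"
  by (auto simp: second_to_def)

lemma second_to_ge1: "2 \<le> x \<Longrightarrow> 1 \<le> second_to b x"
  by (auto simp: second_to_def)

lemma first_to_mono: "1 \<le> x \<Longrightarrow> x < y \<Longrightarrow> first_to a x < first_to a y"
  by (auto simp: first_to_def)

lemma first_second_to_in_unsh: "a \<le> Suc q \<Longrightarrow> b \<le> q \<Longrightarrow> first_to a \<circ> second_to b \<in> unsh [1,1,q]"
proof -
  assume ab: "a \<le> Suc q" "b \<le> q"
  have p1: "first_to a permutes {..<Suc (Suc q)}" using first_to_perm[of a] ab
    by (auto simp: lessThan_Suc_atMost intro: permutes_subset)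
  have p2: "second_to b permutes {..<Suc (Suc q)}" using second_to_perm[of b] ab
    by (auto simp: lessThan_Suc_atMost intro: permutes_subset)
  have "first_to a \<circ> second_to b permutes {..<Suc (Suc q)}" by (rule permutes_compose[OF p2 p1])
  moreover have "(first_to a \<circ> second_to b) x < (first_to a \<circ> second_to b) y" if "Suc (Suc 0) \<le> x" "x < y" for x y
    using that first_to_mono[OF second_to_ge1 second_to_mono] by (simp add: numeral_2_eq_2)
  ultimately show ?thesis unfolding unsh3 by (auto simp: numeral_2_eq_2)
qed

lemma unsh_1_1_q: "unsh [1,1,q] = (\<lambda>(a,b). first_to a \<circ> second_to b) ` ({..Suc q} \<times> {..q})"
proof
  show "(\<lambda>(a,b). first_to a \<circ> second_to b) ` ({..Suc q} \<times> {..q}) \<subseteq> unsh [1,1,q]" using first_second_to_in_unsh by auto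
next
  show "unsh [1,1,q] \<subseteq> (\<lambda>(a,b). first_to a \<circ> second_to b) ` ({..Suc q} \<times> {..q})"
  proof
    fix \<sigma> assume s: "\<sigma> \<in> unsh [1,1,q]"
    then have ps: "\<sigma> permutes {..<Suc (Suc q)}"
      and inc: "\<And>x y. 2 \<le> x \<Longrightarrow> x < y \<Longrightarrow> y < Suc (Suc q) \<Longrightarrow> \<sigma> x < \<sigma> y"
      unfolding unsh3 by auto
    define a where "a = \<sigma> 0"
    define b0 where "b0 = \<sigma> 1"
    define b where "b = (if b0 < a then b0 else b0 - 1)"
    have "\<sigma> 0 \<in> {..<Suc (Suc q)}" by (rule permutes_in_image[OF ps, THEN iffD2]) simp
    then have aq: "a \<le> Suc q" unfolding a_def by simp
    have "\<sigma> 1 \<in> {..<Suc (Suc q)}" by (rule permutes_in_image[OF ps, THEN iffD2]) simp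
    then have b0q: "b0 \<le> Suc q" unfolding b0_def by simp
    have ab0: "a \<noteq> b0" using permutes_inj[OF ps] unfolding a_def b0_def inj_def by force
    have bq: "b \<le> q" using aq b0q ab0 unfolding b_def by auto
    have pt: "first_to a \<circ> second_to b permutes {..<Suc (Suc q)}" using first_second_to_in_unsh[OF aq bq] unfolding unsh3 by simp
    have inc2: "\<And>x y. 2 \<le> x \<Longrightarrow> x < y \<Longrightarrow> y < Suc (Suc q) \<Longrightarrow> first_to a (second_to b x) < first_to a (second_to b y)"
      using first_to_mono[OF second_to_ge1 second_to_mono] by blast
    have "\<sigma> = first_to a \<circ> second_to b"
    proof (rule permutes_eq_if_increasing_block[OF ps pt, of "{0,1}" 2 "Suc (Suc q)"])
      fix x assume "x \<in> {0::nat,1}"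
      then show "\<sigma> x = (first_to a \<circ> second_to b) x"
        using ab0 unfolding a_def b0_def b_def by (auto simp: first_to_def second_to_def)
    qed (auto intro: inc inc2)
    then show "\<sigma> \<in> (\<lambda>(a,b). first_to a \<circ> second_to b) ` ({..Suc q} \<times> {..q})" using aq bq by auto
  qed
qed

lemma inj_on_first_second_to: "inj_on (\<lambda>(a,b). first_to a \<circ> second_to b) ({..Suc q} \<times> {..q})"
proof (rule inj_onI, clarify)
  fix a b a' b' assume "first_to a \<circ> second_to b = first_to a' \<circ> second_to b'"
  then have e0: "(first_to a \<circ> second_to b) 0 = (first_to a' \<circ> second_to b') 0" and e1: "(first_to a \<circ> second_to b) 1 = (first_to a' \<circ> second_to b') 1"
    by simp_all
  from e0 have "a = a'" by (simp add: first_to_def second_to_def)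
  with e1 show "a = a' \<and> b = b'" by (auto simp: first_to_def second_to_def split: if_splits)
qed

lemma sum_unsh_1_1_q: "(\<Sum>\<sigma>\<in>unsh [1,1,q]. f \<sigma>) = (\<Sum>a\<le>Suc q. \<Sum>b\<le>q. f (first_to a \<circ> second_to b))"
  unfolding unsh_1_1_q by (subst sum.reindex[OF inj_on_first_second_to]) (simp add: sum.cartesian_product split_def)

lemma sign_first_second_to: "sign (first_to a \<circ> second_to b) = (-1)^(a+b)"
proof -
  have "permutation (first_to a)" using first_to_perm[of a] by (auto intro: permutes_imp_permutation)
  moreover have "permutation (second_to b)" using second_to_perm[of b] by (auto intro: permutes_imp_permutation)
  ultimately show ?thesis using first_to_perm[of a] second_to_perm[of b] by (simp add: sign_compose power_add)
qed

lemma pick_last_to: "length us = Suc m \<Longrightarrow> i \<le> m \<Longrightarrow> pick (last_to i m) us 0 m = nths us (-{i})"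
  by (rule nth_equalityI) (auto simp: pick_def length_nths_compl_singleton nth_nths_compl_singleton last_to_def)

lemma pick_first_to_0: "pick (first_to a) us 0 1 = [us ! a]"
  by (simp add: pick_def first_to_def)

lemma pick_first_to_1: "length us = Suc m \<Longrightarrow> a \<le> m \<Longrightarrow> pick (first_to a) us 1 m = nths us (-{a})"
  by (rule nth_equalityI) (auto simp: pick_def length_nths_compl_singleton nth_nths_compl_singleton first_to_def simp del: upt_Suc)

lemma pick_first_second_to_0: "pick (first_to a \<circ> second_to b) us 0 1 = [us ! a]"
  by (simp add: pick_def first_to_def second_to_def)

lemma first_second_to_1: "(first_to a \<circ> second_to b) 1 = (if b < a then b else Suc b)"
  by (simp add: first_to_def second_to_def)

lemma nth_first_second_to_1: "length us = Suc (Suc q) \<Longrightarrow> a \<le> Suc q \<Longrightarrow> b \<le> q \<Longrightarrow>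
    us ! (first_to a \<circ> second_to b) 1 = nths us (-{a}) ! b"
  unfolding first_second_to_1 by (subst nth_nths_compl_singleton) auto

lemma first_second_to_shift2: "(first_to a \<circ> second_to b) (t + 2) = (let u = (if t < b then t else Suc t) in if u < a then u else Suc u)"
proof -
  have s: "second_to b (t + 2) = Suc (if t < b then t else Suc t)" by (simp add: second_to_def)
  show ?thesis unfolding comp_def s Let_def by (simp add: first_to_def)
qed

lemma pick_first_second_to_2: "length us = Suc (Suc q) \<Longrightarrow> a \<le> Suc q \<Longrightarrow> b \<le> q \<Longrightarrow>
    pick (first_to a \<circ> second_to b) us 2 q = nths (nths us (-{a})) (-{b})"
proof (rule nth_equalityI)
  assume l: "length us = Suc (Suc q)" "a \<le> Suc q" "b \<le> q"
  have l1: "length (nths us (-{a})) = Suc q" using l by (simp add: length_nths_compl_singleton)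
  show "length (pick (first_to a \<circ> second_to b) us 2 q) = length (nths (nths us (-{a})) (-{b}))"
    using l l1 by (simp add: pick_def length_nths_compl_singleton del: upt_Suc)
  fix t assume t: "t < length (pick (first_to a \<circ> second_to b) us 2 q)"
  then have tq: "t < q" by (simp add: pick_def del: upt_Suc)
  have "pick (first_to a \<circ> second_to b) us 2 q ! t = us ! ((first_to a \<circ> second_to b) (t + 2))"
    using tq by (simp add: pick_def add.commute del: upt_Suc)
  also have "\<dots> = nths (nths us (-{a})) (-{b}) ! t"
    unfolding first_second_to_shift2 Let_def using l l1 tq by (simp add: nth_nths_compl_singleton)
  finally show "pick (first_to a \<circ> second_to b) us 2 q ! t = nths (nths us (-{a})) (-{b}) ! t" .
qed

section \<open>Cochains\<close>

definition lin_last :: "nat \<Rightarrow> (('n::finite \<Rightarrow> 'a::field) list \<Rightarrow> 'a) \<Rightarrow> bool" where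
  "lin_last n \<phi> \<longleftrightarrow> (\<forall>ws a y z. length ws = n \<longrightarrow> \<phi> (ws @ [\<lambda>j. a * y j + z j]) = a * \<phi> (ws @ [y]) + \<phi> (ws @ [z]))"

definition lin_first :: "nat \<Rightarrow> (('n::finite \<Rightarrow> 'a::field) list \<Rightarrow> 'a) \<Rightarrow> bool" where
  "lin_first n \<phi> \<longleftrightarrow> (\<forall>ws a y z. length ws = n \<longrightarrow> \<phi> ((\<lambda>j. a * y j + z j) # ws) = a * \<phi> (y # ws) + \<phi> (z # ws))"

lemma lin_lastD: "lin_last n \<phi> \<Longrightarrow> length ws = n \<Longrightarrow> \<phi> (ws @ [\<lambda>j. a * y j + z j]) = a * \<phi> (ws @ [y]) + \<phi> (ws @ [z])"
  unfolding lin_last_def by blast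

lemma lin_firstD: "lin_first n \<phi> \<Longrightarrow> length ws = n \<Longrightarrow> \<phi> ((\<lambda>j. a * y j + z j) # ws) = a * \<phi> (y # ws) + \<phi> (z # ws)"
  unfolding lin_first_def by blast

lemma lin_last_zero: assumes "lin_last n \<phi>" "length ws = n" shows "\<phi> (ws @ [\<lambda>j. 0]) = 0"
proof -
  have "\<phi> (ws @ [\<lambda>j. 1 * 0 + 0]) = 1 * \<phi> (ws @ [\<lambda>j. 0]) + \<phi> (ws @ [\<lambda>j. 0])"
    using lin_lastD[OF assms, of 1 "\<lambda>j. 0" "\<lambda>j. 0"] by simp
  then have "\<phi> (ws @ [\<lambda>j. 0]) = \<phi> (ws @ [\<lambda>j. 0]) + \<phi> (ws @ [\<lambda>j. 0])" by simp
  then show ?thesis by (metis add_cancel_left_right)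
qed

lemma lin_last_diff: assumes "lin_last n \<phi>" "length ws = n"
  shows "\<phi> (ws @ [\<lambda>j. u j - v j]) = \<phi> (ws @ [u]) - \<phi> (ws @ [v])"
proof -
  have "(\<lambda>j. u j - v j) = (\<lambda>j. (-1) * v j + u j)" by (rule ext) simp
  moreover have "\<phi> (ws @ [\<lambda>j. (-1) * v j + u j]) = (-1) * \<phi> (ws @ [v]) + \<phi> (ws @ [u])"
    using lin_lastD[OF assms, of "-1" v u] by simp
  ultimately show ?thesis by simp
qed

lemma lin_first_diff: assumes "lin_first n \<phi>" "length ws = n"
  shows "\<phi> ((\<lambda>j. u j - v j) # ws) = \<phi> (u # ws) - \<phi> (v # ws)"
proof -
  have "(\<lambda>j. u j - v j) = (\<lambda>j. (-1) * v j + u j)" by (rule ext) simp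
  moreover have "\<phi> ((\<lambda>j. (-1) * v j + u j) # ws) = (-1) * \<phi> (v # ws) + \<phi> (u # ws)"
    using lin_firstD[OF assms, of "-1" v u] by simp
  ultimately show ?thesis by simp
qed

lemma cochain_lin: "is_cochain k \<phi> \<Longrightarrow> length xs = k \<Longrightarrow> i < k \<Longrightarrow>
    \<phi> (xs[i := (\<lambda>j. a * y j + z j)]) = a * \<phi> (xs[i := y]) + \<phi> (xs[i := z])"
  unfolding is_cochain_def by blast

lemma cochain_alt: "is_cochain k \<phi> \<Longrightarrow> length xs = k \<Longrightarrow> i < j \<Longrightarrow> j < k - 1 \<Longrightarrow> xs ! i = xs ! j \<Longrightarrow> \<phi> xs = 0"
  unfolding is_cochain_def by blast

lemma cochain_lin_last: assumes "is_cochain k \<phi>" "k = Suc m" shows "lin_last m \<phi>"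
  unfolding lin_last_def
proof (intro allI impI)
  fix ws :: "('a \<Rightarrow> 'b) list" and a y z assume l: "length ws = m"
  have "\<phi> ((ws @ [y])[m := (\<lambda>j. a * y j + z j)]) = a * \<phi> ((ws @ [y])[m := y]) + \<phi> ((ws @ [y])[m := z])"
    using assms l by (intro cochain_lin) auto
  then show "\<phi> (ws @ [\<lambda>j. a * y j + z j]) = a * \<phi> (ws @ [y]) + \<phi> (ws @ [z])"
    using l by (simp add: list_update_append)
qed

lemma cochain_lin_first: assumes "is_cochain k \<phi>" "k = Suc m" shows "lin_first m \<phi>"
  unfolding lin_first_def
proof (intro allI impI)
  fix ws :: "('a \<Rightarrow> 'b) list" and a y z assume l: "length ws = m"
  have "\<phi> ((y # ws)[0 := (\<lambda>j. a * y j + z j)]) = a * \<phi> ((y # ws)[0 := y]) + \<phi> ((y # ws)[0 := z])"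
    using assms l by (intro cochain_lin) auto
  then show "\<phi> ((\<lambda>j. a * y j + z j) # ws) = a * \<phi> (y # ws) + \<phi> (z # ws)" by simp
qed

lemma cochain_lin_second: assumes "is_cochain k \<phi>" "2 \<le> k" "length r = k - 2"
  shows "\<phi> (u # (\<lambda>j. a * y j + z j) # r) = a * \<phi> (u # y # r) + \<phi> (u # z # r)"
proof -
  have l: "length (u # y # r) = k" using assms by simp
  have "\<phi> ((u # y # r)[1 := (\<lambda>j. a * y j + z j)]) = a * \<phi> ((u # y # r)[1 := y]) + \<phi> ((u # y # r)[1 := z])"
    using assms by (intro cochain_lin[OF assms(1) l]) auto
  then show ?thesis by simp
qed

lemma cochain_anti: assumes c: "is_cochain k \<phi>" and k: "3 \<le> k" and l: "length r = k - 2"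
  shows "\<phi> (x # y # r) = - \<phi> (y # x # r)"
proof -
  define s where "s = (\<lambda>j. 1 * x j + y j)"
  have z: "\<phi> (w # w # r) = 0" for w
    using cochain_alt[OF c, of "w # w # r" 0 1] k l by simp
  have e0: "\<phi> (s # s # r) = 1 * \<phi> (x # s # r) + \<phi> (y # s # r)"
    using cochain_lin[OF c, of "x # s # r" 0 1 x y] k l unfolding s_def by simp
  have e1: "\<phi> (x # s # r) = 1 * \<phi> (x # x # r) + \<phi> (x # y # r)"
    unfolding s_def by (rule cochain_lin_second[OF c]) (use k l in auto)
  have e2: "\<phi> (y # s # r) = 1 * \<phi> (y # x # r) + \<phi> (y # y # r)"
    unfolding s_def by (rule cochain_lin_second[OF c]) (use k l in auto)
  have "0 = \<phi> (x # y # r) + \<phi> (y # x # r)" using e0 e1 e2 z[of s] z[of x] z[of y] by simp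
  then show ?thesis by (simp add: eq_neg_iff_add_eq_0)
qed

lemma pair_Psi:
  assumes hl: "lin_last n \<phi>" and lw: "length w = n"
  shows "pair v (Psi \<phi> w) = \<phi> (w @ [v])"
proof -
  have gen: "finite S \<Longrightarrow> \<phi> (w @ [\<lambda>j. \<Sum>i\<in>S. v i * bvec i j]) = (\<Sum>i\<in>S. v i * \<phi> (w @ [bvec i]))" for S
  proof (induction S rule: finite_induct)
    case empty then show ?case using lin_last_zero[OF hl lw] by simp
  next
    case (insert i S)
    have "(\<lambda>j. \<Sum>i\<in>insert i S. v i * bvec i j) = (\<lambda>j. v i * bvec i j + (\<Sum>i\<in>S. v i * bvec i j))"
      using insert by simp
    then have "\<phi> (w @ [\<lambda>j. \<Sum>i\<in>insert i S. v i * bvec i j]) = v i * \<phi> (w @ [bvec i]) + \<phi> (w @ [\<lambda>j. \<Sum>i\<in>S. v i * bvec i j])"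
      using lin_lastD[OF hl lw, of "v i" "bvec i" "\<lambda>j. \<Sum>i\<in>S. v i * bvec i j"] by simp
    then show ?case using insert by simp
  qed
  have "(\<lambda>j. \<Sum>i\<in>UNIV. v i * bvec i j) = v"
    by (rule ext) (simp add: bvec_def if_distrib cong: if_cong)
  then have "\<phi> (w @ [v]) = (\<Sum>i\<in>UNIV. v i * \<phi> (w @ [bvec i]))" using gen[of UNIV] by simp
  then show ?thesis unfolding pair_def Psi_def by simp
qed

lemma Psi_rcochain: "Psi (rcochain R) [\<beta>] = rsharp R \<beta>"
  unfolding Psi_def rcochain_def rsharp_def by simp

lemma pair_rsharp_Lstar_Psi:
  assumes sym: "symmetric_tensor R" and hl: "lin_last n \<phi>" and lw: "length w = n"
  shows "pair z (rsharp R (Lstar c (Psi \<phi> w) u)) = \<phi> (w @ [Rstar c (rsharp R z) u])"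
proof -
  have "pair z (rsharp R (Lstar c (Psi \<phi> w) u)) = rform R (Lstar c (Psi \<phi> w) u) z" by (rule pair_rsharp)
  also have "\<dots> = rform R z (Lstar c (Psi \<phi> w) u)" by (rule rform_sym[OF sym])
  also have "\<dots> = pair (Lstar c (Psi \<phi> w) u) (rsharp R z)" by (rule pair_rsharp[symmetric])
  also have "\<dots> = - pair u (pmul c (Psi \<phi> w) (rsharp R z))" by (rule pair_Lstar)
  also have "\<dots> = pair (Rstar c (rsharp R z) u) (Psi \<phi> w)" by (rule pair_Rstar[symmetric])
  also have "\<dots> = \<phi> (w @ [Rstar c (rsharp R z) u])" by (rule pair_Psi[OF hl lw])
  finally show ?thesis .
qed

lemma pair_lbr_Psi:
  assumes hl: "lin_last n \<phi>" and lw: "length w = n"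
  shows "pair z (lbr c x (Psi \<phi> w)) = - \<phi> (w @ [adstar c x z])"
proof -
  have "pair z (lbr c x (Psi \<phi> w)) = pair z (pmul c x (Psi \<phi> w)) - pair z (pmul c (Psi \<phi> w) x)"
    unfolding lbr_def pair_diff ..
  also have "\<dots> = - (pair (Lstar c x z) (Psi \<phi> w) - pair (Rstar c x z) (Psi \<phi> w))"
    unfolding pair_Lstar pair_Rstar by simp
  also have "\<dots> = - pair (adstar c x z) (Psi \<phi> w)" unfolding adstar_def pair_diff_left ..
  also have "\<dots> = - \<phi> (w @ [adstar c x z])" by (simp add: pair_Psi[OF hl lw])
  finally show ?thesis .
qed

section \<open>The differential as a pre-Lie cochain differential\<close>

lemma pair_sbr_comb: "pair z (\<lambda>i. X i - e * Y i + e * W i) = pair z X - e * pair z Y + e * pair z W"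
  unfolding pair_def by (simp add: algebra_simps sum.distrib sum_subtractf sum_distrib_left)

lemma minus_one_pow_diff: "i \<le> m \<Longrightarrow> (-1::'a::comm_ring_1)^m * (-1)^(m-i) = (-1)^i"
proof -
  assume "i \<le> m"
  then have "m = i + (m - i)" by simp
  then have "(-1::'a)^m * (-1)^(m-i) = (-1)^i * ((-1)^(m-i) * (-1)^(m-i))"
    by (metis mult.assoc power_add)
  then show ?thesis by (simp add: minus_one_mult_self)
qed

lemma pair_sum_unsh_m_1_0:
  fixes c :: "'n::finite \<Rightarrow> 'n \<Rightarrow> 'n \<Rightarrow> 'a::field"
  assumes sym: "symmetric_tensor R" and hl: "lin_last m \<phi>" and lu: "length us = Suc m"
  shows "pair z (\<lambda>i. \<Sum>\<sigma>\<in>unsh [m, 1, 0]. of_int (sign \<sigma>) *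
          Psi (rcochain R) (Lstar c (Psi \<phi> (pick \<sigma> us 0 m)) (us ! \<sigma> m) # pick \<sigma> us (m + 1) 0) i)
     = (\<Sum>i\<le>m. (-1)^(m-i) * \<phi> (nths us (-{i}) @ [Rstar c (rsharp R z) (us!i)]))"
proof -
  have "pair z (\<lambda>i. \<Sum>\<sigma>\<in>unsh [m, 1, 0]. of_int (sign \<sigma>) *
          Psi (rcochain R) (Lstar c (Psi \<phi> (pick \<sigma> us 0 m)) (us ! \<sigma> m) # pick \<sigma> us (m + 1) 0) i)
      = (\<Sum>\<sigma>\<in>unsh [m, 1, 0]. of_int (sign \<sigma>) *
          pair z (Psi (rcochain R) (Lstar c (Psi \<phi> (pick \<sigma> us 0 m)) (us ! \<sigma> m) # pick \<sigma> us (m + 1) 0)))"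
    unfolding pair_sum pair_scale ..
  also have "\<dots> = (\<Sum>i\<le>m. of_int (sign (last_to i m)) *
          pair z (Psi (rcochain R) (Lstar c (Psi \<phi> (pick (last_to i m) us 0 m)) (us ! last_to i m m) # pick (last_to i m) us (m + 1) 0)))"
    by (rule sum_unsh_m_1_0)
  also have "\<dots> = (\<Sum>i\<le>m. (-1)^(m-i) * \<phi> (nths us (-{i}) @ [Rstar c (rsharp R z) (us!i)]))"
  proof (rule sum.cong[OF refl])
    fix i assume "i \<in> {..m}"
    then have im: "i \<le> m" by simp
    have p0: "pick (last_to i m) us (m + 1) 0 = []" by (simp add: pick_def)
    have p1: "pick (last_to i m) us 0 m = nths us (-{i})" by (rule pick_last_to[OF lu im])
    have u: "us ! last_to i m m = us ! i" using im by (simp add: last_to_def)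
    have lw: "length (nths us (-{i})) = m" using lu im by (simp add: length_nths_compl_singleton)
    have shift_sign: "of_int (sign (last_to i m)) = ((-1::'a)^(m-i))" using last_to_perm[OF im] by simp
    show "of_int (sign (last_to i m)) *
          pair z (Psi (rcochain R) (Lstar c (Psi \<phi> (pick (last_to i m) us 0 m)) (us ! last_to i m m) # pick (last_to i m) us (m + 1) 0))
        = (-1)^(m-i) * \<phi> (nths us (-{i}) @ [Rstar c (rsharp R z) (us!i)])"
      unfolding p0 p1 u Psi_rcochain shift_sign pair_rsharp_Lstar_Psi[OF sym hl lw] ..
  qed
  finally show ?thesis .
qed

lemma pair_sum_unsh_1_m:
  fixes c :: "'n::finite \<Rightarrow> 'n \<Rightarrow> 'n \<Rightarrow> 'a::field"
  assumes hl: "lin_last m \<phi>" and lu: "length us = Suc m"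
  shows "pair z (\<lambda>i. \<Sum>\<sigma>\<in>unsh [1, m]. of_int (sign \<sigma>) *
          lbr c (Psi (rcochain R) (pick \<sigma> us 0 1)) (Psi \<phi> (pick \<sigma> us 1 m)) i)
     = (\<Sum>a\<le>m. (-1)^a * (- \<phi> (nths us (-{a}) @ [adstar c (rsharp R (us!a)) z])))"
proof -
  have "pair z (\<lambda>i. \<Sum>\<sigma>\<in>unsh [1, m]. of_int (sign \<sigma>) *
          lbr c (Psi (rcochain R) (pick \<sigma> us 0 1)) (Psi \<phi> (pick \<sigma> us 1 m)) i)
     = (\<Sum>\<sigma>\<in>unsh [1, m]. of_int (sign \<sigma>) *
          pair z (lbr c (Psi (rcochain R) (pick \<sigma> us 0 1)) (Psi \<phi> (pick \<sigma> us 1 m))))"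
    unfolding pair_sum pair_scale ..
  also have "\<dots> = (\<Sum>a\<le>m. of_int (sign (first_to a)) *
          pair z (lbr c (Psi (rcochain R) (pick (first_to a) us 0 1)) (Psi \<phi> (pick (first_to a) us 1 m))))"
    by (rule sum_unsh_1_m)
  also have "\<dots> = (\<Sum>a\<le>m. (-1)^a * (- \<phi> (nths us (-{a}) @ [adstar c (rsharp R (us!a)) z])))"
  proof (rule sum.cong[OF refl])
    fix a assume "a \<in> {..m}"
    then have am: "a \<le> m" by simp
    have lw: "length (nths us (-{a})) = m" using lu am by (simp add: length_nths_compl_singleton)
    have shift_sign: "of_int (sign (first_to a)) = ((-1::'a)^a)" using first_to_perm[of a] by simp
    show "of_int (sign (first_to a)) *
          pair z (lbr c (Psi (rcochain R) (pick (first_to a) us 0 1)) (Psi \<phi> (pick (first_to a) us 1 m)))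
        = (-1)^a * (- \<phi> (nths us (-{a}) @ [adstar c (rsharp R (us!a)) z]))"
      unfolding pick_first_to_0 pick_first_to_1[OF lu am] Psi_rcochain shift_sign pair_lbr_Psi[OF hl lw] ..
  qed
  finally show ?thesis .
qed

lemma pair_sum_unsh_1_1_q:
  fixes c :: "'n::finite \<Rightarrow> 'n \<Rightarrow> 'n \<Rightarrow> 'a::field"
  assumes hl: "lin_last (Suc q) \<phi>" and lu: "length us = Suc (Suc q)"
  shows "pair z (\<lambda>i. \<Sum>\<sigma>\<in>unsh [1, 1, q]. of_int (sign \<sigma>) *
          Psi \<phi> (Lstar c (Psi (rcochain R) (pick \<sigma> us 0 1)) (us ! \<sigma> 1) # pick \<sigma> us 2 q) i)
     = (\<Sum>a\<le>Suc q. \<Sum>b\<le>q. (-1)^(a+b) * \<phi> (Lstar c (rsharp R (us!a)) (nths us (-{a}) ! b) # nths (nths us (-{a})) (-{b}) @ [z]))"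
proof -
  have "pair z (\<lambda>i. \<Sum>\<sigma>\<in>unsh [1, 1, q]. of_int (sign \<sigma>) *
          Psi \<phi> (Lstar c (Psi (rcochain R) (pick \<sigma> us 0 1)) (us ! \<sigma> 1) # pick \<sigma> us 2 q) i)
     = (\<Sum>\<sigma>\<in>unsh [1, 1, q]. of_int (sign \<sigma>) *
          pair z (Psi \<phi> (Lstar c (Psi (rcochain R) (pick \<sigma> us 0 1)) (us ! \<sigma> 1) # pick \<sigma> us 2 q)))"
    unfolding pair_sum pair_scale ..
  also have "\<dots> = (\<Sum>a\<le>Suc q. \<Sum>b\<le>q. of_int (sign (first_to a \<circ> second_to b)) *
          pair z (Psi \<phi> (Lstar c (Psi (rcochain R) (pick (first_to a \<circ> second_to b) us 0 1)) (us ! (first_to a \<circ> second_to b) 1)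
             # pick (first_to a \<circ> second_to b) us 2 q)))"
    by (rule sum_unsh_1_1_q)
  also have "\<dots> = (\<Sum>a\<le>Suc q. \<Sum>b\<le>q. (-1)^(a+b) * \<phi> (Lstar c (rsharp R (us!a)) (nths us (-{a}) ! b) # nths (nths us (-{a})) (-{b}) @ [z]))"
  proof (intro sum.cong refl)
    fix a b assume "a \<in> {..Suc q}" "b \<in> {..q}"
    then have ab: "a \<le> Suc q" "b \<le> q" by auto
    have lw: "length (Lstar c (rsharp R (us!a)) (nths us (-{a}) ! b) # nths (nths us (-{a})) (-{b})) = Suc q"
      using lu ab by (simp add: length_nths_compl_singleton)
    have shift_sign: "of_int (sign (first_to a \<circ> second_to b)) = ((-1::'a)^(a+b))" by (simp add: sign_first_second_to)
    show "of_int (sign (first_to a \<circ> second_to b)) *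
          pair z (Psi \<phi> (Lstar c (Psi (rcochain R) (pick (first_to a \<circ> second_to b) us 0 1)) (us ! (first_to a \<circ> second_to b) 1)
             # pick (first_to a \<circ> second_to b) us 2 q))
        = (-1)^(a+b) * \<phi> (Lstar c (rsharp R (us!a)) (nths us (-{a}) ! b) # nths (nths us (-{a})) (-{b}) @ [z])"
      unfolding pick_first_second_to_0 nth_first_second_to_1[OF lu ab] pick_first_second_to_2[OF lu ab] Psi_rcochain shift_sign pair_Psi[OF hl lw] by simp
  qed
  finally show ?thesis .
qed

lemma sum_unsh_1_1_q_eq_brr_terms:
  fixes c :: "'n::finite \<Rightarrow> 'n \<Rightarrow> 'n \<Rightarrow> 'a::field"
  assumes hf: "lin_first (Suc q) \<phi>" and lu: "length us = Suc (Suc q)"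
  shows "- (\<Sum>a\<le>Suc q. \<Sum>b\<le>q. (-1)^(a+b) *
        \<phi> (Lstar c (rsharp R (us!a)) (nths us (-{a}) ! b) # nths (nths us (-{a})) (-{b}) @ [z]))
     = (\<Sum>i<length us. \<Sum>j<length us. if i<j then (-1)^(i+j) *
        \<phi> (brr c R (us!i) (us!j) # nths us (-{i,j}) @ [z]) else 0)"
proof -
  define n where "n = length us"
  define f where "f a l = (-1)^a * ((-1)^l * shift_sign a l) *
    \<phi> (Lstar c (rsharp R (us!a)) (us!l) # nths us (-{a,l}) @ [z])" for a l
  have "(\<Sum>b\<le>q. (-1)^(a+b) * \<phi> (Lstar c (rsharp R (us!a)) (nths us (-{a}) ! b)
        # nths (nths us (-{a})) (-{b}) @ [z]))
      = (\<Sum>l<n. if l = a then 0 else f a l)" if "a < n" for a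
  proof -
    let ?F = "\<lambda>x ws. \<phi> (Lstar c (rsharp R (us!a)) x # ws @ [z])"
    have "(\<Sum>b\<le>q. (-1)^(a+b) * \<phi> (Lstar c (rsharp R (us!a)) (nths us (-{a}) ! b)
        # nths (nths us (-{a})) (-{b}) @ [z]))
      = (-1)^a * (\<Sum>b<length us - 1. (-1)^b * ?F (nths us (-{a}) ! b) (nths (nths us (-{a})) (-{b})))"
      using lu by (simp add: lessThan_Suc_atMost sum_distrib_left power_add mult.assoc)
    also have "\<dots> = (-1)^a * (\<Sum>l<n. if l = a then 0 else (-1)^l * shift_sign a l * ?F (us!l) (nths us (-{a,l})))"
      using sum_nths_compl_singleton_twice[OF that[unfolded n_def], of ?F] unfolding n_def by simp
    also have "\<dots> = (\<Sum>l<n. if l = a then 0 else f a l)"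
      unfolding sum_distrib_left f_def by (intro sum.cong) (simp_all add: mult.assoc)
    finally show ?thesis .
  qed
  then have "(\<Sum>a\<le>Suc q. \<Sum>b\<le>q. (-1)^(a+b) * \<phi> (Lstar c (rsharp R (us!a)) (nths us (-{a}) ! b)
        # nths (nths us (-{a})) (-{b}) @ [z]))
      = (\<Sum>a<n. \<Sum>l<n. if l = a then 0 else f a l)"
    using lu unfolding n_def by (simp add: lessThan_Suc_atMost[symmetric])
  also have "\<dots> = (\<Sum>a<n. \<Sum>l<n. if a < l then f a l + f l a else 0)" by (rule sum_pairs)
  also have "\<dots> = - (\<Sum>i<n. \<Sum>j<n. if i<j then (-1)^(i+j) *
        \<phi> (brr c R (us!i) (us!j) # nths us (-{i,j}) @ [z]) else 0)"
  proof -
    have "f a l + f l a = - ((-1)^(a+l) * \<phi> (brr c R (us!a) (us!l) # nths us (-{a,l}) @ [z]))"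
      if al: "a < l" "l < n" for a l
    proof -
      have "length (nths us (-{a,l})) = length us - card {a,l}"
        using al lu n_def by (intro length_nths_compl) auto
      then have lw: "length (nths us (-{a,l}) @ [z]) = Suc q" using al lu by simp
      have e: "-{l,a} = -{a,l}" by auto
      show ?thesis
        unfolding f_def e brr_def lin_first_diff[OF hf lw] using al
        by (simp add: shift_sign_def power_add algebra_simps)
    qed
    then show ?thesis unfolding sum_negf[symmetric] by (intro sum.cong refl) auto
  qed
  finally show ?thesis unfolding n_def by simp
qed

lemma sum_Rstar_adstar_eq_dotr:
  fixes c :: "'n::finite \<Rightarrow> 'n \<Rightarrow> 'n \<Rightarrow> 'a::field"
  assumes hl: "lin_last m \<phi>" and lu: "length us = Suc m"
  shows "(-1)^m * (\<Sum>i\<le>m. (-1)^(m-i) * \<phi> (nths us (-{i}) @ [Rstar c (rsharp R z) (us!i)]))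
         + (\<Sum>i\<le>m. (-1)^i * (- \<phi> (nths us (-{i}) @ [adstar c (rsharp R (us!i)) z])))
       = - (\<Sum>i<length us. (-1)^i * \<phi> (nths us (-{i}) @ [dotr c R (us!i) z]))"
proof -
  have "(-1)^m * ((-1)^(m-i) * \<phi> (nths us (-{i}) @ [Rstar c (rsharp R z) (us!i)]))
         + (-1)^i * (- \<phi> (nths us (-{i}) @ [adstar c (rsharp R (us!i)) z]))
       = - ((-1)^i * \<phi> (nths us (-{i}) @ [dotr c R (us!i) z]))" if im: "i \<le> m" for i
  proof -
    have lw: "length (nths us (-{i})) = m" using lu im by (simp add: length_nths_compl_singleton)
    have s: "(-1::'a)^m * ((-1)^(m-i) * x) = (-1)^i * x" for x
      using minus_one_pow_diff[OF im, where 'a='a] by (simp add: mult.assoc[symmetric])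
    show ?thesis
      unfolding s dotr_def lin_last_diff[OF hl lw] by (simp add: algebra_simps)
  qed
  then have "(\<Sum>i\<le>m. (-1)^m * ((-1)^(m-i) * \<phi> (nths us (-{i}) @ [Rstar c (rsharp R z) (us!i)]))
         + (-1)^i * (- \<phi> (nths us (-{i}) @ [adstar c (rsharp R (us!i)) z])))
       = (\<Sum>i\<le>m. - ((-1)^i * \<phi> (nths us (-{i}) @ [dotr c R (us!i) z])))"
    by (intro sum.cong) auto
  then show ?thesis
    using lu by (simp add: sum_distrib_left sum_subtractf sum_negf lessThan_Suc_atMost)
qed

lemma pair_middle_term_eq_brr_terms:
  fixes c :: "'n::finite \<Rightarrow> 'n \<Rightarrow> 'n \<Rightarrow> 'a::field"
  assumes hl: "lin_last m \<phi>" and hf: "lin_first m \<phi>" and lu: "length us = Suc m"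
  shows "pair z (\<lambda>i. if 1 \<le> m then (\<Sum>\<sigma>\<in>unsh [1, 1, m - 1]. of_int (sign \<sigma>) *
            Psi \<phi> (Lstar c (Psi (rcochain R) (pick \<sigma> us 0 1)) (us ! \<sigma> 1) # pick \<sigma> us 2 (m - 1)) i) else 0)
       = - (\<Sum>i<length us. \<Sum>j<length us. if i<j then (-1)^(i+j) * \<phi> (brr c R (us!i) (us!j) # nths us (-{i,j}) @ [z]) else 0)"
proof (cases m)
  case 0
  then show ?thesis using lu by (simp add: pair_def)
next
  case (Suc q)
  have lu': "length us = Suc (Suc q)" using lu Suc by simp
  have "pair z (\<lambda>i. if 1 \<le> m then (\<Sum>\<sigma>\<in>unsh [1, 1, m - 1]. of_int (sign \<sigma>) *
            Psi \<phi> (Lstar c (Psi (rcochain R) (pick \<sigma> us 0 1)) (us ! \<sigma> 1) # pick \<sigma> us 2 (m - 1)) i) else 0)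
      = (\<Sum>a\<le>Suc q. \<Sum>b\<le>q. (-1)^(a+b) *
            \<phi> (Lstar c (rsharp R (us!a)) (nths us (-{a}) ! b) # nths (nths us (-{a})) (-{b}) @ [z]))"
    unfolding Suc diff_Suc_1 using pair_sum_unsh_1_1_q[OF hl[unfolded Suc] lu'] by simp
  then show ?thesis
    unfolding sum_unsh_1_1_q_eq_brr_terms[OF hf[unfolded Suc] lu', symmetric] by simp
qed

lemma delta_s_eq_prelie_diff:
  fixes c :: "'n::finite \<Rightarrow> 'n \<Rightarrow> 'n \<Rightarrow> 'a::field"
  assumes sym: "symmetric_tensor R" and hl: "lin_last m \<phi>" and hf: "lin_first m \<phi>"
    and len: "length \<alpha>s = Suc (Suc m)"
  shows "delta_s c R (Suc m) \<phi> \<alpha>s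
    = prelie_diff (dotr c R) (brr c R) (\<lambda>ws z. \<phi> (ws @ [z])) (butlast \<alpha>s) (last \<alpha>s)"
proof -
  define us where "us = butlast \<alpha>s"
  define z where "z = last \<alpha>s"
  have lu: "length us = Suc m" using len unfolding us_def by simp
  let ?P = "Psi (rcochain R)" and ?Q = "Psi \<phi>"
  define X where "X i = (\<Sum>\<sigma>\<in>unsh [m, 1, 0]. of_int (sign \<sigma>) *
    ?P (Lstar c (?Q (pick \<sigma> us 0 m)) (us ! \<sigma> m) # pick \<sigma> us (m + 1) 0) i)" for i
  define Y where "Y i = (if 1 \<le> m then (\<Sum>\<sigma>\<in>unsh [1, 1, m - 1]. of_int (sign \<sigma>) *
    ?Q (Lstar c (?P (pick \<sigma> us 0 1)) (us ! \<sigma> 1) # pick \<sigma> us 2 (m - 1)) i) else 0)" for i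
  define W where "W i = (\<Sum>\<sigma>\<in>unsh [1, m]. of_int (sign \<sigma>) *
    lbr c (?P (pick \<sigma> us 0 1)) (?Q (pick \<sigma> us 1 m)) i)" for i
  have "delta_s c R (Suc m) \<phi> \<alpha>s = (-1)^m * pair z (sbr c 1 m ?P ?Q us)"
    unfolding delta_s_def sbr_s_def Upsilon_def us_def z_def by simp
  also have "sbr c 1 m ?P ?Q us = (\<lambda>i. X i - (-1)^m * Y i + (-1)^m * W i)"
    unfolding sbr_def X_def Y_def W_def by (simp add: numeral_2_eq_2 cong: if_cong)
  also have "(-1)^m * pair z (\<lambda>i. X i - (-1)^m * Y i + (-1)^m * W i)
      = ((-1)^m * pair z X + pair z W) - pair z Y"
    unfolding pair_sbr_comb ring_distribs left_minus_one_mult_self by simp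
  also have "\<dots> = prelie_diff (dotr c R) (brr c R) (\<lambda>ws z. \<phi> (ws @ [z])) us z"
    unfolding X_def W_def Y_def pair_sum_unsh_m_1_0[OF sym hl lu] pair_sum_unsh_1_m[OF hl lu]
      sum_Rstar_adstar_eq_dotr[OF hl lu] pair_middle_term_eq_brr_terms[OF hl hf lu] prelie_diff_def
    by (simp cong: if_cong)
  finally show ?thesis unfolding us_def z_def .
qed

lemma delta_s_cochain_eq_prelie_diff:
  fixes c :: "'n::finite \<Rightarrow> 'n \<Rightarrow> 'n \<Rightarrow> 'a::field"
  assumes sym: "symmetric_tensor R" and coc: "is_cochain (Suc m) \<phi>"
    and len: "length \<alpha>s = Suc (Suc m)"
  shows "delta_s c R (Suc m) \<phi> \<alpha>s
    = prelie_diff (dotr c R) (brr c R) (\<lambda>ws z. \<phi> (ws @ [z])) (butlast \<alpha>s) (last \<alpha>s)"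
  using delta_s_eq_prelie_diff[OF sym cochain_lin_last[OF coc refl] cochain_lin_first[OF coc refl] len] .

lemma explicit_sum_eq_prelie_diff:
  fixes c :: "'n::finite \<Rightarrow> 'n \<Rightarrow> 'n \<Rightarrow> 'a::field"
  assumes len: "length \<alpha>s = k + 1"
  shows "- (\<Sum>i = 1..k. (-1) ^ (i + 1) *
                \<phi> (nths (take k \<alpha>s) (- {i - 1}) @ [dotr c R (\<alpha>s ! (i - 1)) (\<alpha>s ! k)]))
           + (\<Sum>i = 1..k. \<Sum>j = i + 1..k. (-1) ^ (i + j) *
                \<phi> (brr c R (\<alpha>s ! (i - 1)) (\<alpha>s ! (j - 1)) # nths \<alpha>s (- {i - 1, j - 1})))
       = prelie_diff (dotr c R) (brr c R) (\<lambda>ws z. \<phi> (ws @ [z])) (butlast \<alpha>s) (last \<alpha>s)"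
proof -
  define us where "us = butlast \<alpha>s"
  define z where "z = last \<alpha>s"
  have lu: "length us = k" using len unfolding us_def by simp
  have a: "\<alpha>s = us @ [z]" unfolding us_def z_def using len
    by (metis append_butlast_last_id add_is_0 length_0_conv zero_neq_one)
  have tk: "take k \<alpha>s = us" using a lu by simp
  have ak: "\<alpha>s ! k = z" using a lu by (simp add: nth_append)
  have ai: "\<alpha>s ! i = us ! i" if "i < k" for i using a lu that by (simp add: nth_append)
  have 1: "(\<Sum>i = 1..k. (-1) ^ (i + 1) *
                \<phi> (nths (take k \<alpha>s) (- {i - 1}) @ [dotr c R (\<alpha>s ! (i - 1)) (\<alpha>s ! k)]))
      = (\<Sum>i<k. (-1)^i * \<phi> (nths us (-{i}) @ [dotr c R (us!i) z]))"
    by (simp add: sum.atLeast1_atMost_eq tk ak ai)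
  have 2: "(\<Sum>i = 1..k. \<Sum>j = i + 1..k. (-1) ^ (i + j) *
                \<phi> (brr c R (\<alpha>s ! (i - 1)) (\<alpha>s ! (j - 1)) # nths \<alpha>s (- {i - 1, j - 1})))
      = (\<Sum>i<k. \<Sum>j<k. if i < j then (-1)^(i+j) * \<phi> (brr c R (us!i) (us!j) # nths us (-{i,j}) @ [z]) else 0)"
    unfolding sum.atLeast1_atMost_eq[unfolded One_nat_def[symmetric]]
  proof (rule sum.cong[OF refl])
    fix i assume i: "i \<in> {..<k}"
    have e: "{Suc i + 1..k} = {Suc (Suc i)..k}" by simp
    show "(\<Sum>j = Suc i + 1..k. (-1) ^ (Suc i + j) *
                \<phi> (brr c R (\<alpha>s ! (Suc i - 1)) (\<alpha>s ! (j - 1)) # nths \<alpha>s (- {Suc i - 1, j - 1})))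
       = (\<Sum>j<k. if i < j then (-1)^(i+j) * \<phi> (brr c R (us!i) (us!j) # nths us (-{i,j}) @ [z]) else 0)"
      unfolding e sum_inner_shift
    proof (rule sum.cong[OF refl])
      fix j assume j: "j \<in> {..<k}"
      have na: "nths \<alpha>s (-{i,j}) = nths us (-{i,j}) @ [z]" using i j lu a by (simp add: nths_snoc_compl)
      show "(if i < j then (-1) ^ (Suc i + Suc j) *
                \<phi> (brr c R (\<alpha>s ! (Suc i - 1)) (\<alpha>s ! (Suc j - 1)) # nths \<alpha>s (- {Suc i - 1, Suc j - 1})) else 0)
         = (if i < j then (-1)^(i+j) * \<phi> (brr c R (us!i) (us!j) # nths us (-{i,j}) @ [z]) else 0)"
        using i j by (simp add: ai na)
    qed
  qed
  show ?thesis unfolding 1 2 prelie_diff_def us_def[symmetric] z_def[symmetric] lu by (simp cong: if_cong)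
qed

lemma delta_s_explicit:
  fixes c :: "'n::finite \<Rightarrow> 'n \<Rightarrow> 'n \<Rightarrow> 'a::field"
  assumes sym: "symmetric_tensor R" and coc: "is_cochain k \<phi>" and k: "1 \<le> k"
    and len: "length \<alpha>s = k + 1"
  shows "delta_s c R k \<phi> \<alpha>s =
           - (\<Sum>i = 1..k. (-1) ^ (i + 1) *
                \<phi> (nths (take k \<alpha>s) (- {i - 1}) @ [dotr c R (\<alpha>s ! (i - 1)) (\<alpha>s ! k)]))
           + (\<Sum>i = 1..k. \<Sum>j = i + 1..k. (-1) ^ (i + j) *
                \<phi> (brr c R (\<alpha>s ! (i - 1)) (\<alpha>s ! (j - 1)) # nths \<alpha>s (- {i - 1, j - 1})))"
proof -
  obtain m where "k = Suc m" using k by (cases k) auto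
  then show ?thesis
    unfolding explicit_sum_eq_prelie_diff[OF len]
    using delta_s_cochain_eq_prelie_diff[OF sym, of m \<phi> \<alpha>s c] coc len by simp
qed

lemma lin_last_delta_s:
  fixes c :: "'n::finite \<Rightarrow> 'n \<Rightarrow> 'n \<Rightarrow> 'a::field"
  assumes sym: "symmetric_tensor R" and coc: "is_cochain (Suc m) \<phi>"
  shows "lin_last (Suc m) (delta_s c R (Suc m) \<phi>)"
  unfolding lin_last_def
proof (intro allI impI)
  let ?M = "dotr c R" and ?B = "brr c R" and ?\<Phi> = "\<lambda>ws z. \<phi> (ws @ [z])"
  fix ws :: "('n \<Rightarrow> 'a) list" and a y z assume l: "length ws = Suc m"
  note eq = delta_s_cochain_eq_prelie_diff[OF sym coc]
  have "delta_s c R (Suc m) \<phi> (ws @ [\<lambda>j. a * y j + z j]) = prelie_diff ?M ?B ?\<Phi> ws (\<lambda>j. a * y j + z j)"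
    using eq[of "ws @ [\<lambda>j. a * y j + z j]"] l by simp
  also have "\<dots> = a * prelie_diff ?M ?B ?\<Phi> ws y + prelie_diff ?M ?B ?\<Phi> ws z"
  proof (rule prelie_diff_lin_last)
    show "?M x (\<lambda>j. a * u j + v j) = (\<lambda>j. a * ?M x u j + ?M x v j)" for x u v
      by (rule dotr_lin_right)
    show "?\<Phi> w (\<lambda>j. a * u j + v j) = a * ?\<Phi> w u + ?\<Phi> w v" if "length w = length ws - 1" for w u v
      using lin_lastD[OF cochain_lin_last[OF coc refl], of w] that l by simp
  qed
  also have "\<dots> = a * delta_s c R (Suc m) \<phi> (ws @ [y]) + delta_s c R (Suc m) \<phi> (ws @ [z])"
    using eq[of "ws @ [y]"] eq[of "ws @ [z]"] l by simp
  finally show "delta_s c R (Suc m) \<phi> (ws @ [\<lambda>j. a * y j + z j])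
    = a * delta_s c R (Suc m) \<phi> (ws @ [y]) + delta_s c R (Suc m) \<phi> (ws @ [z])" .
qed

lemma lin_first_delta_s:
  fixes c :: "'n::finite \<Rightarrow> 'n \<Rightarrow> 'n \<Rightarrow> 'a::field"
  assumes sym: "symmetric_tensor R" and coc: "is_cochain (Suc m) \<phi>"
  shows "lin_first (Suc m) (delta_s c R (Suc m) \<phi>)"
  unfolding lin_first_def
proof (intro allI impI)
  let ?M = "dotr c R" and ?B = "brr c R" and ?\<Phi> = "\<lambda>ws z. \<phi> (ws @ [z])"
  fix ws :: "('n \<Rightarrow> 'a) list" and a y z assume l: "length ws = Suc m"
  note eq = delta_s_cochain_eq_prelie_diff[OF sym coc]
  have bl: "butlast (x # ws) = x # butlast ws" "last (x # ws) = last ws" for x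
    using l by (cases ws; simp)+
  have lb: "length (butlast ws) = m" using l by simp
  have "delta_s c R (Suc m) \<phi> ((\<lambda>j. a * y j + z j) # ws)
      = prelie_diff ?M ?B ?\<Phi> ((\<lambda>j. a * y j + z j) # butlast ws) (last ws)"
    using eq[of "(\<lambda>j. a * y j + z j) # ws"] l bl by simp
  also have "\<dots> = a * prelie_diff ?M ?B ?\<Phi> (y # butlast ws) (last ws)
      + prelie_diff ?M ?B ?\<Phi> (z # butlast ws) (last ws)"
  proof (rule prelie_diff_lin_first)
    show "?M (\<lambda>j. a * u j + v j) t = (\<lambda>j. a * ?M u t j + ?M v t j)" for u v t
      by (rule dotr_lin_left)
    show "?B (\<lambda>j. a * u j + v j) t = (\<lambda>j. a * ?B u t j + ?B v t j)" for u v t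
      by (rule brr_lin_left)
    show "?\<Phi> (butlast ws) (\<lambda>j. a * u j + v j) = a * ?\<Phi> (butlast ws) u + ?\<Phi> (butlast ws) v" for u v
      using lin_lastD[OF cochain_lin_last[OF coc refl] lb] by simp
    show "?\<Phi> ((\<lambda>j. a * u j + v j) # r) t = a * ?\<Phi> (u # r) t + ?\<Phi> (v # r) t"
      if "length r = length (butlast ws) - 1" "1 \<le> length (butlast ws)" for r t u v
      using lin_firstD[OF cochain_lin_first[OF coc refl], of "r @ [t]"] that lb by simp
    show "?\<Phi> (B # (\<lambda>j. a * u j + v j) # r) t = a * ?\<Phi> (B # u # r) t + ?\<Phi> (B # v # r) t"
      if "length r = length (butlast ws) - 2" "2 \<le> length (butlast ws)" for B r t u v
      using cochain_lin_second[OF coc, of "r @ [t]" B a u v] that lb by simp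
  qed
  also have "\<dots> = a * delta_s c R (Suc m) \<phi> (y # ws) + delta_s c R (Suc m) \<phi> (z # ws)"
    using eq[of "y # ws"] eq[of "z # ws"] l bl by simp
  finally show "delta_s c R (Suc m) \<phi> ((\<lambda>j. a * y j + z j) # ws)
    = a * delta_s c R (Suc m) \<phi> (y # ws) + delta_s c R (Suc m) \<phi> (z # ws)" .
qed

lemma lin_first_brr_jacobi:
  assumes pl: "pre_lie c" and sym: "symmetric_tensor R" and sm: "s_matrix c R"
    and hf: "lin_first m \<phi>" and lw: "length ws = m - 1" and m: "1 \<le> m"
  shows "\<phi> (brr c R (brr c R x y) w # ws @ [z]) - \<phi> (brr c R (brr c R x w) y # ws @ [z])
    + \<phi> (brr c R (brr c R y w) x # ws @ [z]) = 0"
proof -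
  let ?B = "brr c R"
  have "?B (?B x y) w = (\<lambda>j. (-1) * ?B (?B y w) x j + ?B (?B x w) y j)"
  proof
    fix j
    show "?B (?B x y) w j = (-1) * ?B (?B y w) x j + ?B (?B x w) y j"
      using fun_cong[OF brr_jacobi[OF pl sym sm, of x y w], of j]
      by (simp add: algebra_simps eq_neg_iff_add_eq_0)
  qed
  moreover have "length (ws @ [z]) = m" using lw m by simp
  ultimately show ?thesis
    using lin_firstD[OF hf, of "ws @ [z]" "-1" "?B (?B y w) x" "?B (?B x w) y"] by simp
qed

lemma delta_s_delta_s:
  fixes c :: "'n::finite \<Rightarrow> 'n \<Rightarrow> 'n \<Rightarrow> 'a::field_char_0"
  assumes pl: "pre_lie c" and sym: "symmetric_tensor R" and sm: "s_matrix c R"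
    and coc: "is_cochain (Suc m) \<phi>" and len: "length \<alpha>s = Suc m + 2"
  shows "delta_s c R (Suc (Suc m)) (delta_s c R (Suc m) \<phi>) \<alpha>s = 0"
proof -
  let ?M = "dotr c R" and ?B = "brr c R" and ?\<Phi> = "\<lambda>ws z. \<phi> (ws @ [z])"
  define \<psi> where "\<psi> = delta_s c R (Suc m) \<phi>"
  have hl: "lin_last m \<phi>" and hf: "lin_first m \<phi>"
    using cochain_lin_last[OF coc refl] cochain_lin_first[OF coc refl] .
  have "delta_s c R (Suc (Suc m)) \<psi> \<alpha>s = prelie_diff ?M ?B (\<lambda>ws z. \<psi> (ws @ [z])) (butlast \<alpha>s) (last \<alpha>s)"
    unfolding \<psi>_def using len
    by (intro delta_s_eq_prelie_diff[OF sym lin_last_delta_s[OF sym coc] lin_first_delta_s[OF sym coc]]) simp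
  also have "\<dots> = prelie_diff ?M ?B (prelie_diff ?M ?B ?\<Phi>) (butlast \<alpha>s) (last \<alpha>s)"
  proof (rule prelie_diff_cong)
    fix ws :: "('n \<Rightarrow> 'a) list" and t assume "length ws = length (butlast \<alpha>s) - 1"
    then show "\<psi> (ws @ [t]) = prelie_diff ?M ?B ?\<Phi> ws t"
      unfolding \<psi>_def using len by (subst delta_s_cochain_eq_prelie_diff[OF sym coc]) simp_all
  qed
  also have "\<dots> = 0"
  proof (rule prelie_diff_squared[where p = m])
    show "length (butlast \<alpha>s) = m + 2" using len by simp
    show "?\<Phi> ws (?M x (?M y z)) - ?\<Phi> ws (?M y (?M x z)) = ?\<Phi> ws (?M (?B x y) z)"
      if "length ws = m" for ws x y z
      using lin_last_diff[OF hl that, of "?M x (?M y z)" "?M y (?M x z)"] dotr_pre_lie[OF pl sym sm, of x y z]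
      by simp
    show "?\<Phi> (?B (?B x y) w # ws) z - ?\<Phi> (?B (?B x w) y # ws) z + ?\<Phi> (?B (?B y w) x # ws) z = 0"
      if "1 \<le> m" "length ws = m - 1" for ws x y w z
      using lin_first_brr_jacobi[OF pl sym sm hf that(2,1)] by simp
    show "?\<Phi> (x # y # ws) z = - ?\<Phi> (y # x # ws) z" if "2 \<le> m" "length ws = m - 2" for x y ws z
      using cochain_anti[OF coc, of "ws @ [z]" x y] that by simp
  qed
  finally show ?thesis unfolding \<psi>_def .
qed

theorem proposition4p1:
  fixes c :: "'n::finite \<Rightarrow> 'n \<Rightarrow> 'n \<Rightarrow> 'a::field_char_0"
    and R :: "'n \<Rightarrow> 'n \<Rightarrow> 'a"
    and \<phi> :: "('n \<Rightarrow> 'a) list \<Rightarrow> 'a"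
    and k :: nat
  assumes "pre_lie c"
    and "symmetric_tensor R"
    and "s_matrix c R"
    and "1 \<le> k"
    and "is_cochain k \<phi>"
  shows "(\<forall>\<alpha>s. length \<alpha>s = k + 2 \<longrightarrow> delta_s c R (k + 1) (delta_s c R k \<phi>) \<alpha>s = 0)
    \<and> (\<forall>\<alpha>s. length \<alpha>s = k + 1 \<longrightarrow>
         delta_s c R k \<phi> \<alpha>s =
           - (\<Sum>i = 1..k. (-1) ^ (i + 1) *
                \<phi> (nths (take k \<alpha>s) (- {i - 1}) @ [dotr c R (\<alpha>s ! (i - 1)) (\<alpha>s ! k)]))
           + (\<Sum>i = 1..k. \<Sum>j = i + 1..k. (-1) ^ (i + j) *
                \<phi> (brr c R (\<alpha>s ! (i - 1)) (\<alpha>s ! (j - 1)) # nths \<alpha>s (- {i - 1, j - 1}))))"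
proof -
  obtain m where k: "k = Suc m" using \<open>1 \<le> k\<close> by (cases k) auto
  have "delta_s c R (k + 1) (delta_s c R k \<phi>) \<alpha>s = 0" if "length \<alpha>s = k + 2" for \<alpha>s
    using delta_s_delta_s[OF assms(1-3), of m \<phi> \<alpha>s] assms(5) that k by simp
  then show ?thesis
    using delta_s_explicit[OF assms(2,5,4)] by blast
qed

end
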